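(* Assume the hypotheses of the main addition theorem (see context), and write $S_r=S_r(\wp(z_1),\ldots,\wp(z_\ell))$. Then for all $r_1,r_2\in\{1,\ldots,\ell+1\}$, \[ (-1)^{r_1}S_{r_2-1}\,\mu(\ell+1-r_1)-(-1)^{r_2}S_{r_1-1}\,\mu(\ell+1-r_2)=\big(S_{r_1}S_{r_2-1}-S_{r_2}S_{r_1-1}\big)\mu(\ell+1). \]
   Context: Let $\omega_1,\omega_2\in\mathbb{C}$ with $\mathrm{Im}(\omega_2/\omega_1)>0$, $\Lambda=2\omega_1\mathbb{Z}+2\omega_2\mathbb{Z}$, $\wp$ the Weierstrass elliptic function of $\Lambda$ with invariants $g_2,g_3$, so $(\wp')^2=4\wp^3-g_2\wp-g_3$. For $j\ge0$, $\wp^{(j)}$ is the $j$-th derivative ($\wp^{(0)}=\wp$), and $\wp^{(-2)}\equiv1$; the index $-2$ counts as even. $\mathbb{N}=\{0,1,2,\ldots\}$. Standing setup: $m,\ell\ge1$; $n_1,\ldots,n_m$ pairwise distinct in $\mathbb{N}\cup\{-2\}$, $k_1,\ldots,k_\ell$ pairwise distinct in $\mathbb{N}\cup\{-2\}$, with $\ell=\max(\max_i n_i,\max_i k_i)+1$; $\gamma_1,\ldots,\gamma_m\in\mathbb{C}$; $z_1,\ldots,z_\ell\in\mathbb{C}\setminus\Lambda$ with $\det(\wp^{(k_j)}(z_i))_{i,j=1}^\ell\ne0$; $\lambda_1,\ldots,\lambda_\ell$ the unique solution of $\sum_{i=1}^m\gamma_i\wp^{(n_i)}(z_j)=\sum_{i=1}^\ell\lambda_i\wp^{(k_i)}(z_j)$,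 $j=1,\ldots,\ell$; $z=z_1+\cdots+z_\ell\notin\Lambda$; and $\psi(s)=\sum_i\gamma_i\wp^{(n_i)}(s)-\sum_i\lambda_i\wp^{(k_i)}(s)$ has a pole of order exactly $\ell+1$ at $0$. Define $\varphi(s)=\big(\sum_{n_i\text{ odd}}\gamma_i\wp^{(n_i)}(s)-\sum_{k_i\text{ odd}}\lambda_i\wp^{(k_i)}(s)\big)^2-\big(\sum_{n_i\text{ even}}\gamma_i\wp^{(n_i)}(s)-\sum_{k_i\text{ even}}\lambda_i\wp^{(k_i)}(s)\big)^2$, a polynomial in $\wp(s)$ of degree at most $\ell+1$ with coefficients $\mu(r)$: $\varphi(s)=\sum_{r=0}^{\ell+1}\mu(r)\wp(s)^r$. Hypotheses of the main addition theorem: $\varphi\not\equiv0$, $z\not\equiv\pm z_i\pmod\Lambda$ for all $i$, $z_i\not\equiv-z_j\pmod\Lambda$ for $i\ne j$. $S_r(x_1,\ldots,x_N)$ is the $r$-th elementary symmetric polynomial ($S_0=1$, $S_r=0$ for $r>N$). *)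

theory Defs
  imports "HOL-Complex_Analysis.Complex_Analysis" "Jordan_Normal_Form.Determinant"
begin

definition lattice :: "complex \<Rightarrow> complex \<Rightarrow> complex set" where
  "lattice w1 w2 = {of_int a * (2 * w1) + of_int b * (2 * w2) | a b. True}"

text \<open>Weierstrass wp function (meaningful off the lattice; the series converges absolutely).\<close>
definition wp :: "complex \<Rightarrow> complex \<Rightarrow> complex \<Rightarrow> complex" where
  "wp w1 w2 s = 1 / s\<^sup>2 + infsum (\<lambda>w. 1 / (s - w)\<^sup>2 - 1 / w\<^sup>2) (lattice w1 w2 - {0})"

definition wpd :: "complex \<Rightarrow> complex \<Rightarrow> int \<Rightarrow> complex \<Rightarrow> complex" where
  "wpd w1 w2 j s = (if j = -2 then 1 else (deriv ^^ nat j) (wp w1 w2) s)"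

definition esym :: "nat \<Rightarrow> (nat \<Rightarrow> complex) \<Rightarrow> nat \<Rightarrow> complex" where
  "esym N x r = (\<Sum>I | I \<subseteq> {1..N} \<and> card I = r. \<Prod>i\<in>I. x i)"

definition psi :: "complex \<Rightarrow> complex \<Rightarrow> nat \<Rightarrow> (nat \<Rightarrow> int) \<Rightarrow> (nat \<Rightarrow> complex)
    \<Rightarrow> nat \<Rightarrow> (nat \<Rightarrow> int) \<Rightarrow> (nat \<Rightarrow> complex) \<Rightarrow> complex \<Rightarrow> complex" where
  "psi w1 w2 m n gam l k lam s =
     (\<Sum>i=1..m. gam i * wpd w1 w2 (n i) s) - (\<Sum>i=1..l. lam i * wpd w1 w2 (k i) s)"

definition phi :: "complex \<Rightarrow> complex \<Rightarrow> nat \<Rightarrow> (nat \<Rightarrow> int) \<Rightarrow> (nat \<Rightarrow> complex)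
    \<Rightarrow> nat \<Rightarrow> (nat \<Rightarrow> int) \<Rightarrow> (nat \<Rightarrow> complex) \<Rightarrow> complex \<Rightarrow> complex" where
  "phi w1 w2 m n gam l k lam s =
     ((\<Sum>i\<in>{i\<in>{1..m}. odd (n i)}. gam i * wpd w1 w2 (n i) s)
       - (\<Sum>i\<in>{i\<in>{1..l}. odd (k i)}. lam i * wpd w1 w2 (k i) s))\<^sup>2
   - ((\<Sum>i\<in>{i\<in>{1..m}. even (n i)}. gam i * wpd w1 w2 (n i) s)
       - (\<Sum>i\<in>{i\<in>{1..l}. even (k i)}. lam i * wpd w1 w2 (k i) s))\<^sup>2"

end

theory Submission
  imports Defs
begin

(* The equations defining lam say that psi vanishes at z_1, ..., z_l. Since
   phi = psi_odd^2 - psi_even^2 = (psi_odd - psi_even) * psi, the polynomial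
   P(X) = sum_r mu(r) X^r of degree at most l + 1 vanishes at the l points wp(z_j).
   These points are distinct: if wp(z_i) = wp(z_j), the differential equation
   wp'^2 = 4 wp^3 - g2 wp - g3 gives wp'(z_i) = +- wp'(z_j), and since every derivative
   of wp is a polynomial in wp and wp', all derivatives of wp agree either at z_i and z_j,
   or at z_i and -z_j. In the second case the identity theorem makes -z_j - z_i a period
   of wp, which contradicts z_i + z_j not in the lattice (wp has a pole only at lattice
   points); in the first case two rows of the determinant coincide. Hence
   P = (X - wp(z_1)) ... (X - wp(z_l)) (a X + b), and comparing coefficients (Vieta)
   gives (-1)^r mu(l + 1 - r) = a S_r - b S_(r-1) with a = mu(l + 1); eliminating b
   for r = r1, r2 yields the identity. *)

locale period_lattice =
  fixes w1 w2 :: complex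
  assumes Im_period_ratio_pos: "Im (w2 / w1) > 0"
begin

abbreviation \<Lambda> :: "complex set" where "\<Lambda> \<equiv> lattice w1 w2"

definition lattice_point :: "int \<Rightarrow> int \<Rightarrow> complex" where
  "lattice_point m n = of_int m * (2 * w1) + of_int n * (2 * w2)"

definition period_det :: real where "period_det = Im (cnj w1 * w2)"

definition gap :: real where "gap = 2 * period_det / (cmod w1 + cmod w2)"

lemma lattice_eq_range: "\<Lambda> = range (\<lambda>(m, n). lattice_point m n)"
  unfolding lattice_def lattice_point_def by auto

lemma lattice_point_in_lattice [simp]: "lattice_point m n \<in> \<Lambda>"
  unfolding lattice_eq_range by auto

lemma latticeE: assumes "w \<in> \<Lambda>" obtains m n where "w = lattice_point m n"
  using assms unfolding lattice_eq_range by auto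

lemma w1_nonzero: "w1 \<noteq> 0"
  using Im_period_ratio_pos by auto

lemma period_det_pos: "period_det > 0"
proof -
  have "Im (w2 / w1) = Im (w2 * cnj w1) / (cmod w1)\<^sup>2"
    by (subst complex_div_cnj) (simp add: Im_divide_of_real)
  moreover have "(cmod w1)\<^sup>2 > 0" using w1_nonzero by simp
  ultimately show ?thesis
    using Im_period_ratio_pos unfolding period_det_def by (simp add: zero_less_divide_iff mult.commute)
qed

lemma coordinate_bounds:
  fixes x y :: real
  shows "\<bar>y\<bar> * period_det \<le> cmod w1 * cmod (of_real x * w1 + of_real y * w2)"
    and "\<bar>x\<bar> * period_det \<le> cmod w2 * cmod (of_real x * w1 + of_real y * w2)"
proof -
  let ?s = "of_real x * w1 + of_real y * w2"
  have "Im (cnj w1 * ?s) = y * period_det" "Im (cnj w2 * ?s) = - x * period_det"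
    unfolding period_det_def by (simp_all add: algebra_simps)
  moreover have "\<bar>Im (cnj w * ?s)\<bar> \<le> cmod w * cmod ?s" for w
    by (metis abs_Im_le_cmod complex_mod_cnj norm_mult)
  ultimately show "\<bar>y\<bar> * period_det \<le> cmod w1 * cmod ?s" "\<bar>x\<bar> * period_det \<le> cmod w2 * cmod ?s"
    using period_det_pos by (metis abs_mult abs_minus abs_of_pos)+
qed

lemma periods_independent:
  fixes x y :: real
  assumes "of_real x * w1 + of_real y * w2 = 0" shows "x = 0" "y = 0"
  using coordinate_bounds[of y x] coordinate_bounds[of x y] assms period_det_pos
  by (auto simp: zero_less_mult_iff mult_le_0_iff)

lemma lattice_point_real:
  "lattice_point m n = of_real (2 * of_int m) * w1 + of_real (2 * of_int n) * w2"
  unfolding lattice_point_def by simp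

lemma gap_pos: "gap > 0"
  using period_det_pos w1_nonzero unfolding gap_def by (simp add: add_pos_nonneg)

lemma norm_lattice_point_ge: "(\<bar>of_int m\<bar> + \<bar>of_int n\<bar>) * gap \<le> cmod (lattice_point m n)"
proof -
  have "\<bar>2 * of_int n\<bar> * period_det \<le> cmod w1 * cmod (lattice_point m n)"
    and "\<bar>2 * of_int m\<bar> * period_det \<le> cmod w2 * cmod (lattice_point m n)"
    using coordinate_bounds[where x = "2 * of_int m" and y = "2 * of_int n"] unfolding lattice_point_real by auto
  then have "(\<bar>of_int m\<bar> + \<bar>of_int n\<bar>) * (2 * period_det) \<le> (cmod w1 + cmod w2) * cmod (lattice_point m n)"
    by (simp add: algebra_simps abs_mult)
  moreover have "cmod w1 + cmod w2 > 0" using w1_nonzero by (simp add: add_pos_nonneg)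
  ultimately show ?thesis unfolding gap_def by (simp add: field_simps)
qed

lemma lattice_point_eq_0_iff: "lattice_point m n = 0 \<longleftrightarrow> m = 0 \<and> n = 0"
  using periods_independent[of "2 * of_int m" "2 * of_int n"] unfolding lattice_point_real by auto

lemma lattice_point_add: "lattice_point m n + lattice_point m' n' = lattice_point (m + m') (n + n')"
  and lattice_point_uminus: "- lattice_point m n = lattice_point (- m) (- n)"
  and lattice_point_diff: "lattice_point m n - lattice_point m' n' = lattice_point (m - m') (n - n')"
  unfolding lattice_point_def by (simp_all add: algebra_simps)

lemma lattice_point_eq_iff: "lattice_point m n = lattice_point m' n' \<longleftrightarrow> m = m' \<and> n = n'"
  using lattice_point_eq_0_iff[of "m - m'" "n - n'"] lattice_point_diff[of m n m' n'] by auto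

lemma lattice_add: "a \<in> \<Lambda> \<Longrightarrow> b \<in> \<Lambda> \<Longrightarrow> a + b \<in> \<Lambda>"
  and lattice_uminus: "a \<in> \<Lambda> \<Longrightarrow> - a \<in> \<Lambda>"
  and lattice_diff: "a \<in> \<Lambda> \<Longrightarrow> b \<in> \<Lambda> \<Longrightarrow> a - b \<in> \<Lambda>"
  by (metis latticeE lattice_point_add lattice_point_uminus lattice_point_diff lattice_point_in_lattice)+

lemma zero_in_lattice [simp]: "0 \<in> \<Lambda>"
  by (metis lattice_point_in_lattice lattice_point_eq_0_iff)

lemma not_in_lattice_add: "s \<notin> \<Lambda> \<Longrightarrow> p \<in> \<Lambda> \<Longrightarrow> s + p \<notin> \<Lambda>"
  using lattice_diff[of "s + p" p] by auto

lemma norm_lattice_ge_gap: assumes "w \<in> \<Lambda>" "w \<noteq> 0" shows "gap \<le> cmod w"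
proof -
  obtain m n where w: "w = lattice_point m n" using assms latticeE by blast
  then have "1 \<le> \<bar>real_of_int m\<bar> + \<bar>of_int n\<bar>" using assms lattice_point_eq_0_iff by auto
  then have "gap \<le> (\<bar>of_int m\<bar> + \<bar>of_int n\<bar>) * gap" using gap_pos by simp
  then show ?thesis using norm_lattice_point_ge w by (meson order.trans)
qed

lemma dist_lattice_ge_gap: "a \<in> \<Lambda> \<Longrightarrow> b \<in> \<Lambda> \<Longrightarrow> a \<noteq> b \<Longrightarrow> gap \<le> dist a b"
  using norm_lattice_ge_gap[of "a - b"] lattice_diff by (auto simp: dist_norm)

lemma not_in_lattice_near: "q \<in> \<Lambda> \<Longrightarrow> s \<noteq> q \<Longrightarrow> dist s q < gap \<Longrightarrow> s \<notin> \<Lambda>"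
  using dist_lattice_ge_gap[of s q] by auto

lemma closed_lattice: "closed \<Lambda>"
  by (rule discrete_imp_closed[OF gap_pos]) (meson dist_lattice_ge_gap not_le)

lemma closed_lattice_nonzero: "closed (\<Lambda> - {0})"
  by (rule discrete_imp_closed[OF gap_pos]) (meson DiffD1 dist_lattice_ge_gap not_le)

lemma countable_lattice: "countable \<Lambda>"
  unfolding lattice_eq_range by simp

lemma infinite_lattice_nonzero: "infinite (\<Lambda> - {0})"
proof -
  have "inj (\<lambda>m::nat. lattice_point (int m) 1)" by (auto simp: inj_def lattice_point_eq_iff)
  moreover have "range (\<lambda>m::nat. lattice_point (int m) 1) \<subseteq> \<Lambda> - {0}"
    using lattice_point_eq_0_iff by auto
  ultimately show ?thesis using range_inj_infinite infinite_super by blast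
qed

lemma open_lattice_compl: "open (- \<Lambda>)"
  using closed_lattice by (simp add: open_Compl)

lemma connected_lattice_compl: "connected (- \<Lambda>)"
  using connected_open_diff_countable[of UNIV \<Lambda>] countable_lattice by (simp add: Compl_eq_Diff_UNIV connected_UNIV)

lemma half_periods_not_in_lattice: "w1 \<notin> \<Lambda>" "w2 \<notin> \<Lambda>"
proof -
  have "w1 \<noteq> lattice_point m n" for m n
  proof
    assume "w1 = lattice_point m n"
    then have "of_real (2 * of_int m - 1) * w1 + of_real (2 * of_int n) * w2 = 0"
      unfolding lattice_point_real by (simp add: algebra_simps)
    then have "2 * real_of_int m - 1 = 0" by (rule periods_independent)
    then have "2 * m = 1" by linarith
    then show False by presburger
  qed
  moreover have "w2 \<noteq> lattice_point m n" for m n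
  proof
    assume "w2 = lattice_point m n"
    then have "of_real (2 * of_int m) * w1 + of_real (2 * of_int n - 1) * w2 = 0"
      unfolding lattice_point_real by (simp add: algebra_simps)
    then have "2 * real_of_int n - 1 = 0" by (rule periods_independent)
    then have "2 * n = 1" by linarith
    then show False by presburger
  qed
  ultimately show "w1 \<notin> \<Lambda>" "w2 \<notin> \<Lambda>" by (metis latticeE)+
qed

end

definition decay :: "int \<Rightarrow> real" where "decay m = 1 / (1 + \<bar>of_int m\<bar>) powr (3/2)"

lemma decay_nonneg: "decay m \<ge> 0"
  unfolding decay_def by simp

lemma summable_decay: "summable (\<lambda>n. decay (int n))"
proof -
  have "summable (\<lambda>n. real (Suc n) powr (-3/2))"
    by (subst summable_Suc_iff) (subst summable_real_powr_iff, simp)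
  moreover have "real (Suc n) powr (-3/2) = decay (int n)" for n
    unfolding decay_def by (simp add: powr_minus_divide add.commute)
  ultimately show ?thesis by simp
qed

lemma sum_decay_le: assumes "finite A" shows "sum decay A \<le> 2 * (\<Sum>n. decay (int n))"
proof -
  have bound: "sum decay B \<le> (\<Sum>n. decay (int n))" if "finite B" "inj_on f B" "\<forall>m\<in>B. decay m = decay (int (f m))"
    for B and f :: "int \<Rightarrow> nat"
  proof -
    have "sum decay B = sum (\<lambda>n. decay (int n)) (f ` B)"
      using that by (simp add: sum.reindex)
    also have "\<dots> \<le> (\<Sum>n. decay (int n))"
      using that by (intro sum_le_suminf summable_decay) (auto simp: decay_nonneg)
    finally show ?thesis .
  qed
  have "sum decay (A \<inter> {0..}) \<le> (\<Sum>n. decay (int n))"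
    by (rule bound[where f = nat]) (use assms in \<open>auto simp: inj_on_def\<close>)
  moreover have "sum decay (A - {0..}) \<le> (\<Sum>n. decay (int n))"
    by (rule bound[where f = "\<lambda>m. nat (- m)"]) (use assms in \<open>auto simp: inj_on_def decay_def\<close>)
  moreover have "sum decay A = sum decay (A \<inter> {0..}) + sum decay (A - {0..})"
    using assms by (metis Diff_eq sum.Int_Diff)
  ultimately show ?thesis by linarith
qed

lemma sum_decay_product_le:
  assumes "finite F" shows "(\<Sum>(m, n)\<in>F. decay m * decay n) \<le> (2 * (\<Sum>n. decay (int n)))\<^sup>2"
proof -
  have "(\<Sum>(m, n)\<in>F. decay m * decay n) \<le> (\<Sum>(m, n)\<in>fst ` F \<times> snd ` F. decay m * decay n)"
    using assms by (intro sum_mono2) (auto simp: decay_nonneg intro: rev_image_eqI)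
  also have "\<dots> = sum decay (fst ` F) * sum decay (snd ` F)"
    by (simp add: sum_product sum.cartesian_product)
  also have "\<dots> \<le> (2 * (\<Sum>n. decay (int n))) * (2 * (\<Sum>n. decay (int n)))"
    using assms suminf_nonneg[OF summable_decay decay_nonneg]
    by (intro mult_mono sum_decay_le sum_nonneg decay_nonneg) auto
  finally show ?thesis by (simp add: power2_eq_square)
qed

context period_lattice
begin

lemma inverse_cube_lattice_point_le:
  assumes "(m, n) \<noteq> (0, 0)"
  shows "1 / cmod (lattice_point m n) ^ 3 \<le> 8 / gap ^ 3 * (decay m * decay n)"
proof -
  define s where "s = \<bar>real_of_int m\<bar> + \<bar>of_int n\<bar>"
  have s1: "s \<ge> 1" using assms unfolding s_def by auto
  define a b where "a = 1 + \<bar>real_of_int m\<bar>" and "b = 1 + \<bar>real_of_int n\<bar>"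
  have ab_pos: "a > 0" "b > 0" unfolding a_def b_def by auto
  have "a * b \<le> (2 * s) * (2 * s)"
    using s1 ab_pos by (intro mult_mono) (auto simp: a_def b_def s_def)
  then have "(a * b) powr (3/2) \<le> ((2 * s) powr 2) powr (3/2)"
    using ab_pos s1 by (intro powr_mono2) (auto simp: powr_numeral power2_eq_square)
  also have "\<dots> = (2 * s) powr (2 * (3/2))"
    by (simp only: powr_powr)
  also have "\<dots> = (2 * s) ^ 3"
    using s1 by (simp add: powr_numeral)
  finally have "1 / (8 * s ^ 3) \<le> 1 / (a * b) powr (3/2)"
    using ab_pos s1 by (intro divide_left_mono) (auto simp: power_mult_distrib)
  also have "\<dots> = decay m * decay n"
    using ab_pos unfolding decay_def a_def b_def by (simp add: powr_mult)
  finally have decay_ge: "1 / (8 * s ^ 3) \<le> decay m * decay n" .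
  have "s * gap \<le> cmod (lattice_point m n)"
    using norm_lattice_point_ge unfolding s_def by simp
  moreover have "0 < s * gap" using s1 gap_pos by simp
  ultimately have "1 / cmod (lattice_point m n) ^ 3 \<le> 1 / (s * gap) ^ 3"
    by (intro frac_le power_mono) auto
  also have "\<dots> = 8 / gap ^ 3 * (1 / (8 * s ^ 3))"
    using gap_pos s1 by (simp add: field_simps)
  also have "\<dots> \<le> 8 / gap ^ 3 * (decay m * decay n)"
    using decay_ge gap_pos by (intro mult_left_mono) auto
  finally show ?thesis .
qed

lemma summable_inverse_cube_lattice: "(\<lambda>w. 1 / cmod w ^ 3) summable_on (\<Lambda> - {0})"
proof (rule nonneg_bdd_above_summable_on)
  let ?C = "8 / gap ^ 3 * (2 * (\<Sum>n. decay (int n)))\<^sup>2"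
  show "bdd_above (sum (\<lambda>w. 1 / cmod w ^ 3) ` {G. G \<subseteq> \<Lambda> - {0} \<and> finite G})"
  proof (rule bdd_aboveI2)
    fix G assume G: "G \<in> {G. G \<subseteq> \<Lambda> - {0} \<and> finite G}"
    define F where "F = (\<lambda>(m, n). lattice_point m n) -` G"
    have inj: "inj (\<lambda>(m, n). lattice_point m n)" by (auto simp: inj_def lattice_point_eq_iff)
    have "finite F" unfolding F_def using G inj by (auto intro: finite_vimageI)
    have "G = (\<lambda>(m, n). lattice_point m n) ` F" unfolding F_def using G by (auto simp: lattice_eq_range)
    then have "sum (\<lambda>w. 1 / cmod w ^ 3) G = (\<Sum>(m, n)\<in>F. 1 / cmod (lattice_point m n) ^ 3)"
      using inj by (simp add: sum.reindex inj_on_subset case_prod_unfold)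
    also have "\<dots> \<le> (\<Sum>(m, n)\<in>F. 8 / gap ^ 3 * (decay m * decay n))"
    proof (rule sum_mono, clarify)
      fix m n assume "(m, n) \<in> F"
      then have "(m, n) \<noteq> (0, 0)" using G by (auto simp: F_def lattice_point_eq_0_iff)
      then show "1 / cmod (lattice_point m n) ^ 3 \<le> 8 / gap ^ 3 * (decay m * decay n)"
        by (rule inverse_cube_lattice_point_le)
    qed
    also have "\<dots> = 8 / gap ^ 3 * (\<Sum>(m, n)\<in>F. decay m * decay n)"
      by (simp add: sum_distrib_left case_prod_unfold)
    also have "\<dots> \<le> ?C"
      using gap_pos \<open>finite F\<close> by (intro mult_left_mono sum_decay_product_le) auto
    finally show "sum (\<lambda>w. 1 / cmod w ^ 3) G \<le> ?C" .
  qed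
qed simp

end

lemma norm_diff_ge_scaled:
  fixes s w :: "'a::real_normed_vector"
  assumes "norm s \<le> R" "r > 0" "r \<le> norm (s - w)"
  shows "r / (R + r) * norm w \<le> norm (s - w)"
proof -
  have R: "R \<ge> 0" using assms(1) norm_ge_zero order.trans by blast
  show ?thesis
  proof (cases "norm w \<le> R + r")
    case True
    have "r / (R + r) * norm w \<le> r / (R + r) * (R + r)"
      using True assms R by (intro mult_left_mono) auto
    also have "\<dots> = r" using assms R by simp
    finally show ?thesis using assms by linarith
  next
    case False
    have "0 \<le> R * (norm w - R - r)" using False R by (intro mult_nonneg_nonneg) auto
    then have "r / (R + r) * norm w \<le> norm w - R"
      using assms R by (simp add: field_simps algebra_simps)
    moreover have "norm w - R \<le> norm (s - w)"
      using assms norm_triangle_ineq2[of w s] by (simp add: norm_minus_commute)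
    ultimately show ?thesis by linarith
  qed
qed

definition wp_term :: "complex \<Rightarrow> complex \<Rightarrow> complex" where
  "wp_term s w = 1 / (s - w)\<^sup>2 - 1 / w\<^sup>2"

lemma wp_term_has_field_derivative:
  assumes "s \<noteq> w" shows "((\<lambda>s. wp_term s w) has_field_derivative -2 / (s - w) ^ 3) (at s)"
proof -
  have inv: "- (2 * t * inverse ((t\<^sup>2) ^ Suc (Suc 0))) - 0 = -2 / t ^ 3" if "t \<noteq> 0" for t :: complex
    using that by (simp add: power2_eq_square power3_eq_cube field_simps)
  have "((\<lambda>s. inverse ((s - w)\<^sup>2) - 1 / w\<^sup>2) has_field_derivative
          - (2 * (s - w) * inverse (((s - w)\<^sup>2) ^ Suc (Suc 0))) - 0) (at s)"
    using assms by (intro DERIV_diff DERIV_inverse_fun DERIV_const) (auto intro!: derivative_eq_intros)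
  moreover have "s - w \<noteq> 0" using assms by simp
  ultimately show ?thesis
    unfolding inv[OF \<open>s - w \<noteq> 0\<close>] by (simp add: wp_term_def inverse_eq_divide)
qed

context period_lattice
begin

lemma norm_wp_term_le:
  assumes "cmod s \<le> R" "r > 0" "r \<le> cmod (s - w)" "w \<in> \<Lambda> - {0}"
  shows "cmod (wp_term s w) \<le> R * (2 + R / gap) * ((R + r) / r)\<^sup>2 / cmod w ^ 3"
proof -
  have R: "R \<ge> 0" using assms(1) norm_ge_zero order.trans by blast
  have w_gap: "gap \<le> cmod w" using assms norm_lattice_ge_gap by auto
  then have w_pos: "cmod w > 0" using gap_pos by linarith
  define c where "c = r / (R + r)"
  have c_pos: "c > 0" unfolding c_def using assms R by simp
  have "(s - w)\<^sup>2 \<noteq> 0" "w\<^sup>2 \<noteq> 0" using assms w_pos by auto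
  then have "wp_term s w = (1 * w\<^sup>2 - 1 * (s - w)\<^sup>2) / ((s - w)\<^sup>2 * w\<^sup>2)"
    unfolding wp_term_def by (rule diff_frac_eq)
  also have "1 * w\<^sup>2 - 1 * (s - w)\<^sup>2 = s * (2 * w - s)"
    by (simp add: power2_eq_square algebra_simps)
  finally have eq: "cmod (wp_term s w) = cmod s * cmod (2 * w - s) / (cmod (s - w) ^ 2 * cmod w ^ 2)"
    by (simp add: norm_divide norm_mult norm_power)
  have "cmod (2 * w - s) \<le> 2 * cmod w + R"
    using norm_triangle_ineq4[of "2 * w" s] assms(1) by (simp add: norm_mult)
  also have "\<dots> \<le> (2 + R / gap) * cmod w"
    using w_gap gap_pos R by (simp add: field_simps mult_left_mono)
  finally have num: "cmod s * cmod (2 * w - s) \<le> R * ((2 + R / gap) * cmod w)"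
    using assms(1) R by (intro mult_mono) auto
  have "(c * cmod w)\<^sup>2 \<le> cmod (s - w) ^ 2"
    using norm_diff_ge_scaled[OF assms(1-3)] c_pos w_pos unfolding c_def[symmetric] by (intro power_mono) auto
  then have den: "(c * cmod w)\<^sup>2 * cmod w ^ 2 \<le> cmod (s - w) ^ 2 * cmod w ^ 2"
    by (intro mult_right_mono) auto
  have "cmod (wp_term s w) \<le> R * ((2 + R / gap) * cmod w) / ((c * cmod w)\<^sup>2 * cmod w ^ 2)"
    unfolding eq using num den c_pos w_pos R gap_pos by (intro frac_le) auto
  also have "\<dots> = R * (2 + R / gap) * (1 / c)\<^sup>2 / cmod w ^ 3"
    using c_pos w_pos by (simp add: field_simps power2_eq_square power3_eq_cube)
  also have "1 / c = (R + r) / r" unfolding c_def by simp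
  finally show ?thesis .
qed

text \<open>\<open>\<Omega>\<close> is the domain of holomorphy of the regular part \<open>wp - 1 / s\<^sup>2\<close>.\<close>
abbreviation \<Omega> :: "complex set" where "\<Omega> \<equiv> insert 0 (- \<Lambda>)"

lemma open_Omega: "open \<Omega>"
proof -
  have "\<Omega> = - (\<Lambda> - {0})" by auto
  show ?thesis unfolding \<open>\<Omega> = - (\<Lambda> - {0})\<close> by (rule open_Compl[OF closed_lattice_nonzero])
qed

lemma Omega_dist_lattice: assumes "s \<in> \<Omega>" obtains r where "r > 0" "\<And>w. w \<in> \<Lambda> - {0} \<Longrightarrow> r \<le> cmod (s - w)"
proof -
  obtain r where "r > 0" "ball s r \<subseteq> \<Omega>" using open_Omega assms open_contains_ball by blast
  then show ?thesis by (intro that[of r]) (auto simp: dist_norm subset_iff not_less)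
qed

lemma norm_cube_term_le:
  assumes "cmod s \<le> R" "r > 0" "r \<le> cmod (s - w)" "w \<in> \<Lambda> - {0}"
  shows "cmod (-2 / (s - w) ^ 3) \<le> 2 * ((R + r) / r) ^ 3 * (1 / cmod w ^ 3)"
proof -
  have R: "R \<ge> 0" using assms(1) norm_ge_zero order.trans by blast
  have w_pos: "cmod w > 0" using assms norm_lattice_ge_gap gap_pos by fastforce
  define c where "c = r / (R + r)"
  have c_pos: "c > 0" unfolding c_def using assms R by simp
  have "(c * cmod w) ^ 3 \<le> cmod (s - w) ^ 3"
    using norm_diff_ge_scaled[OF assms(1-3)] c_pos w_pos unfolding c_def[symmetric] by (intro power_mono) auto
  moreover have "0 < (c * cmod w) ^ 3" using c_pos w_pos by simp
  ultimately have "2 / cmod (s - w) ^ 3 \<le> 2 / (c * cmod w) ^ 3"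
    by (intro divide_left_mono mult_pos_pos) auto
  then show ?thesis
    using c_pos w_pos assms(2) R unfolding c_def by (simp add: norm_divide norm_power field_simps)
qed

lemma summable_wp_term: assumes "s \<in> \<Omega>" shows "wp_term s summable_on (\<Lambda> - {0})"
proof -
  obtain r where r: "r > 0" "\<And>w. w \<in> \<Lambda> - {0} \<Longrightarrow> r \<le> cmod (s - w)"
    using Omega_dist_lattice[OF assms] by blast
  define K where "K = cmod s * (2 + cmod s / gap) * ((cmod s + r) / r)\<^sup>2"
  have "(\<lambda>w. norm (wp_term s w)) summable_on (\<Lambda> - {0})"
  proof (rule summable_on_comparison_test)
    show "(\<lambda>w. K * (1 / cmod w ^ 3)) summable_on (\<Lambda> - {0})"
      by (rule summable_on_cmult_right[OF summable_inverse_cube_lattice])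
    show "norm (wp_term s w) \<le> K * (1 / cmod w ^ 3)" if "w \<in> \<Lambda> - {0}" for w
      using norm_wp_term_le[of s "cmod s" r w] r that unfolding K_def by simp
  qed simp
  then show ?thesis by (rule abs_summable_summable)
qed

lemma summable_cube_term: assumes "s \<in> \<Omega>" shows "(\<lambda>w. -2 / (s - w) ^ 3) summable_on (\<Lambda> - {0})"
proof -
  obtain r where r: "r > 0" "\<And>w. w \<in> \<Lambda> - {0} \<Longrightarrow> r \<le> cmod (s - w)"
    using Omega_dist_lattice[OF assms] by blast
  define K where "K = 2 * ((cmod s + r) / r) ^ 3"
  have "(\<lambda>w. norm (-2 / (s - w) ^ 3)) summable_on (\<Lambda> - {0})"
  proof (rule summable_on_comparison_test)
    show "(\<lambda>w. K * (1 / cmod w ^ 3)) summable_on (\<Lambda> - {0})"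
      by (rule summable_on_cmult_right[OF summable_inverse_cube_lattice])
    show "norm (-2 / (s - w) ^ 3) \<le> K * (1 / cmod w ^ 3)" if "w \<in> \<Lambda> - {0}" for w
      using norm_cube_term_le[of s "cmod s" r w] r that unfolding K_def by simp
  qed simp
  then show ?thesis by (rule abs_summable_summable)
qed

end

lemma has_sum_imp_sums_from_nat_into:
  assumes "countable A" "infinite A" "(f has_sum S) A"
  shows "(\<lambda>n. f (from_nat_into A n)) sums S"
  using has_sum_reindex_bij_betw[OF bij_betw_from_nat_into[OF assms(1,2)]] assms(3)
  by (auto intro: has_sum_imp_sums)

context period_lattice
begin

abbreviation lattice_enum :: "nat \<Rightarrow> complex" where
  "lattice_enum \<equiv> from_nat_into (\<Lambda> - {0})"

lemma lattice_enum_in: "lattice_enum n \<in> \<Lambda> - {0}"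
  using bij_betw_from_nat_into[of "\<Lambda> - {0}"] countable_lattice infinite_lattice_nonzero
  by (auto simp: bij_betw_def)

lemma sums_lattice_enum: "f summable_on (\<Lambda> - {0}) \<Longrightarrow> (\<lambda>n. f (lattice_enum n)) sums infsum f (\<Lambda> - {0})"
  using countable_lattice infinite_lattice_nonzero
  by (intro has_sum_imp_sums_from_nat_into has_sum_infsum) auto

lemma wp_term_locally_dominated:
  assumes "s \<in> \<Omega>"
  shows "\<exists>d h. 0 < d \<and> summable h \<and>
           (\<forall>\<^sub>F n in sequentially. \<forall>y\<in>ball s d \<inter> \<Omega>. norm (wp_term y (lattice_enum n)) \<le> h n)"
proof -
  obtain e where e: "e > 0" "ball s e \<subseteq> \<Omega>" using open_Omega assms open_contains_ball by blast
  define d where "d = e / 2"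
  define h where "h n = (cmod s + d) * (2 + (cmod s + d) / gap) * ((cmod s + d + d) / d)\<^sup>2
                          * (1 / cmod (lattice_enum n) ^ 3)" for n
  have "summable h"
    unfolding h_def by (intro summable_mult sums_summable[OF sums_lattice_enum] summable_inverse_cube_lattice)
  moreover have "norm (wp_term y (lattice_enum n)) \<le> h n" if y: "y \<in> ball s d" for y n
  proof -
    have "lattice_enum n \<notin> ball s e" using e lattice_enum_in by blast
    then have "d \<le> cmod (y - lattice_enum n)"
      using y dist_triangle[of s "lattice_enum n" y] unfolding d_def by (simp add: dist_norm norm_minus_commute)
    moreover have "cmod y \<le> cmod s + d"
      using y norm_triangle_ineq2[of y s] by (simp add: dist_norm norm_minus_commute)
    ultimately show ?thesis
      using norm_wp_term_le[of y "cmod s + d" d "lattice_enum n"] lattice_enum_in e unfolding h_def d_def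
      by simp
  qed
  ultimately show ?thesis using e unfolding d_def by (intro exI[of _ d] exI[of _ h]) (auto simp: d_def)
qed

definition wp_reg :: "complex \<Rightarrow> complex" where "wp_reg s = infsum (wp_term s) (\<Lambda> - {0})"
definition wp_reg' :: "complex \<Rightarrow> complex" where "wp_reg' s = infsum (\<lambda>w. -2 / (s - w) ^ 3) (\<Lambda> - {0})"

lemma wp_eq_wp_reg: "wp w1 w2 s = 1 / s\<^sup>2 + wp_reg s"
  unfolding wp_def wp_reg_def wp_term_def ..

lemma wp_reg_has_field_derivative: assumes "s \<in> \<Omega>" shows "(wp_reg has_field_derivative wp_reg' s) (at s)"
proof -
  have deriv: "((\<lambda>x. wp_term x (lattice_enum n)) has_field_derivative -2 / (x - lattice_enum n) ^ 3) (at x)"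
    if "x \<in> \<Omega>" for n x
    using that lattice_enum_in[of n] by (intro wp_term_has_field_derivative) auto
  obtain g g' where g: "\<forall>x\<in>\<Omega>. ((\<lambda>n. wp_term x (lattice_enum n)) sums g x)
      \<and> ((\<lambda>n. -2 / (x - lattice_enum n) ^ 3) sums g' x) \<and> (g has_field_derivative g' x) (at x)"
    using series_and_derivative_comparison_local[OF open_Omega deriv wp_term_locally_dominated] by blast
  have wp_reg_eq: "wp_reg x = g x" if "x \<in> \<Omega>" for x
    unfolding wp_reg_def
    by (rule sums_unique2[OF sums_lattice_enum[OF summable_wp_term[OF that]] conjunct1[OF bspec[OF g that]]])
  have "wp_reg' s = g' s"
    unfolding wp_reg'_def
    by (rule sums_unique2[OF sums_lattice_enum[OF summable_cube_term[OF assms]]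
          conjunct1[OF conjunct2[OF bspec[OF g assms]]]])
  moreover have "(g has_field_derivative g' s) (at s)" using bspec[OF g assms] by blast
  ultimately show ?thesis
    using has_field_derivative_transform_within_open[OF _ open_Omega assms] wp_reg_eq by metis
qed

end

lemma additive_int_fun_eq_0:
  fixes f :: "int \<Rightarrow> 'a::ab_group_add"
  assumes add: "\<And>a b. f (a + b) = f a + f b" and one: "f 1 = 0"
  shows "f m = 0"
proof (induction m rule: int_induct[where k = 0])
  case base
  show ?case using add[of 0 0] by simp
next
  case (step1 i)
  then show ?case using add[of i 1] one by simp
next
  case (step2 i)
  then show ?case using add[of "i - 1" 1] one by simp
qed

context period_lattice
begin

definition wp' :: "complex \<Rightarrow> complex" where "wp' s = infsum (\<lambda>w. -2 / (s - w) ^ 3) \<Lambda>"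

lemma wp'_eq_wp_reg': assumes "s \<in> \<Omega>" shows "wp' s = -2 / s ^ 3 + wp_reg' s"
proof -
  have "\<Lambda> = {0} \<union> (\<Lambda> - {0})" by auto
  then have "wp' s = infsum (\<lambda>w. -2 / (s - w) ^ 3) ({0} \<union> (\<Lambda> - {0}))" unfolding wp'_def by simp
  also have "\<dots> = -2 / s ^ 3 + wp_reg' s"
    unfolding wp_reg'_def by (subst infsum_Un_disjoint[OF _ summable_cube_term[OF assms]]) auto
  finally show ?thesis .
qed

lemma wp_has_field_derivative: assumes "s \<notin> \<Lambda>" shows "(wp w1 w2 has_field_derivative wp' s) (at s)"
proof -
  have "s \<noteq> 0" "s \<in> \<Omega>" using assms by auto
  \<comment> \<open>Since \<open>1 / 0 = 0\<close>, the function \<open>1 / s\<^sup>2\<close> is \<open>wp_term s 0\<close>.\<close>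
  moreover have "(\<lambda>s. 1 / s\<^sup>2) = (\<lambda>s. wp_term s 0)" by (simp add: wp_term_def)
  ultimately have "((\<lambda>s. 1 / s\<^sup>2 + wp_reg s) has_field_derivative -2 / s ^ 3 + wp_reg' s) (at s)"
    using wp_term_has_field_derivative[of s 0] by (intro DERIV_add wp_reg_has_field_derivative) auto
  then show ?thesis using wp'_eq_wp_reg' \<open>s \<in> \<Omega>\<close> by (simp add: wp_eq_wp_reg[abs_def])
qed

lemma holomorphic_wp: "wp w1 w2 holomorphic_on - \<Lambda>"
  using wp_has_field_derivative open_lattice_compl
  by (auto simp: holomorphic_on_def field_differentiable_def at_within_open[OF _ open_lattice_compl])

lemma bij_betw_add_lattice: assumes "p \<in> \<Lambda>" shows "bij_betw (\<lambda>v. v + p) \<Lambda> \<Lambda>"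
proof (rule bij_betwI[where g = "\<lambda>v. v - p"])
  show "(\<lambda>v. v + p) \<in> \<Lambda> \<rightarrow> \<Lambda>" using lattice_add assms by auto
  show "(\<lambda>v. v - p) \<in> \<Lambda> \<rightarrow> \<Lambda>" using lattice_diff assms by auto
qed auto

lemma bij_betw_uminus_lattice: "bij_betw uminus \<Lambda> \<Lambda>"
  and bij_betw_uminus_lattice_nonzero: "bij_betw uminus (\<Lambda> - {0}) (\<Lambda> - {0})"
  by (auto intro!: bij_betwI[where g = uminus] lattice_uminus)

lemma wp'_periodic: assumes "p \<in> \<Lambda>" shows "wp' (s + p) = wp' s"
proof -
  have "infsum (\<lambda>v. -2 / (s + p - (v + p)) ^ 3) \<Lambda> = infsum (\<lambda>w. -2 / (s + p - w) ^ 3) \<Lambda>"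
    by (rule infsum_reindex_bij_betw[OF bij_betw_add_lattice[OF assms]])
  then show ?thesis unfolding wp'_def by simp
qed

lemma wp_reg_even: "wp_reg (- s) = wp_reg s"
proof -
  have "infsum (\<lambda>v. wp_term (- s) (- v)) (\<Lambda> - {0}) = infsum (wp_term (- s)) (\<Lambda> - {0})"
    by (rule infsum_reindex_bij_betw[OF bij_betw_uminus_lattice_nonzero])
  moreover have "wp_term (- s) (- w) = wp_term s w" for w
    unfolding wp_term_def by (simp add: power2_eq_square algebra_simps)
  ultimately show ?thesis unfolding wp_reg_def by simp
qed

lemma wp_even: "wp w1 w2 (- s) = wp w1 w2 s"
  unfolding wp_eq_wp_reg using wp_reg_even by simp

lemma wp'_odd: "wp' (- s) = - wp' s"
proof -
  have "infsum (\<lambda>v. -2 / (- s - - v) ^ 3) \<Lambda> = infsum (\<lambda>w. -2 / (- s - w) ^ 3) \<Lambda>"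
    by (rule infsum_reindex_bij_betw[OF bij_betw_uminus_lattice])
  moreover have "-2 / (- s - - v) ^ 3 = - (-2 / (s - v) ^ 3)" for v
  proof -
    have "(- s - - v) ^ 3 = - ((s - v) ^ 3)"
      using power_minus_odd[of 3 "s - v"] by simp
    then show ?thesis by simp
  qed
  ultimately have "wp' (- s) = infsum (\<lambda>v. - (-2 / (s - v) ^ 3)) \<Lambda>" unfolding wp'_def by simp
  also have "\<dots> = - wp' s" unfolding wp'_def by (rule infsum_uminus)
  finally show ?thesis .
qed

lemma wp_shift_diff_const:
  assumes "p \<in> \<Lambda>" "s \<notin> \<Lambda>" "t \<notin> \<Lambda>"
  shows "wp w1 w2 (s + p) - wp w1 w2 s = wp w1 w2 (t + p) - wp w1 w2 t"
proof -
  define D where "D x = wp w1 w2 (x + p) - wp w1 w2 x" for x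
  have D': "(D has_field_derivative 0) (at x)" if "x \<in> - \<Lambda>" for x
  proof -
    have "((\<lambda>x. wp w1 w2 (x + p)) has_field_derivative wp' (x + p)) (at x)"
      using wp_has_field_derivative[OF not_in_lattice_add[of x p]] that assms DERIV_shift by blast
    then have "(D has_field_derivative wp' (x + p) - wp' x) (at x)"
      unfolding D_def using wp_has_field_derivative[of x] that by (intro DERIV_diff) auto
    then show ?thesis using wp'_periodic[OF assms(1)] by simp
  qed
  have "continuous_on (- \<Lambda>) D"
    using D' by (intro continuous_at_imp_continuous_on) (auto intro: DERIV_isCont)
  then obtain c where "\<And>x. x \<in> - \<Lambda> \<Longrightarrow> D x = c"
    using DERIV_zero_connected_constant[OF connected_lattice_compl open_lattice_compl, of "{}" D] D' by auto
  then show ?thesis using assms unfolding D_def by auto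
qed

lemma wp_periodic: assumes "p \<in> \<Lambda>" "s \<notin> \<Lambda>" shows "wp w1 w2 (s + p) = wp w1 w2 s"
proof -
  \<comment> \<open>The jump \<open>c p\<close> is additive in \<open>p\<close> and vanishes on \<open>2 w1\<close>, \<open>2 w2\<close> by evenness at \<open>- w1\<close>, \<open>- w2\<close>.\<close>
  define c where "c p = wp w1 w2 (w1 + p) - wp w1 w2 w1" for p
  note w1 = half_periods_not_in_lattice(1)
  have jump: "wp w1 w2 (t + q) - wp w1 w2 t = c q" if "q \<in> \<Lambda>" "t \<notin> \<Lambda>" for q t
    using wp_shift_diff_const[OF that w1] unfolding c_def by (simp add: add.commute)
  have c_add: "c (q + q') = c q + c q'" if "q \<in> \<Lambda>" "q' \<in> \<Lambda>" for q q'
  proof -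
    have "c (q + q') = (wp w1 w2 ((w1 + q') + q) - wp w1 w2 (w1 + q')) + (wp w1 w2 (w1 + q') - wp w1 w2 w1)"
      unfolding c_def by (simp add: algebra_simps)
    then show ?thesis using jump[OF that(1) not_in_lattice_add[OF w1 that(2)]] jump[OF that(2) w1] by simp
  qed
  have c_double: "c (2 * w) = 0" if "w \<notin> \<Lambda>" "2 * w \<in> \<Lambda>" for w
  proof -
    have "- w \<notin> \<Lambda>" using that(1) lattice_uminus by fastforce
    then have "wp w1 w2 (- w + 2 * w) - wp w1 w2 (- w) = c (2 * w)" by (rule jump[OF that(2)])
    then show ?thesis using wp_even[of w] by simp
  qed
  have "lattice_point 1 0 = 2 * w1" "lattice_point 0 1 = 2 * w2"
    by (simp_all add: lattice_point_def)
  then have c1: "c (lattice_point 1 0) = 0" "c (lattice_point 0 1) = 0"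
    using c_double half_periods_not_in_lattice lattice_point_in_lattice by metis+
  obtain m n where p: "p = lattice_point m n" using assms(1) latticeE by blast
  have "c (lattice_point m 0) = 0"
  proof (rule additive_int_fun_eq_0[of "\<lambda>m. c (lattice_point m 0)"])
    show "c (lattice_point (a + b) 0) = c (lattice_point a 0) + c (lattice_point b 0)" for a b
      using c_add[OF lattice_point_in_lattice lattice_point_in_lattice, of a 0 b 0] by (simp add: lattice_point_add)
  qed (rule c1)
  moreover have "c (lattice_point 0 n) = 0"
  proof (rule additive_int_fun_eq_0[of "\<lambda>n. c (lattice_point 0 n)"])
    show "c (lattice_point 0 (a + b)) = c (lattice_point 0 a) + c (lattice_point 0 b)" for a b
      using c_add[OF lattice_point_in_lattice lattice_point_in_lattice, of 0 a 0 b] by (simp add: lattice_point_add)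
  qed (rule c1)
  ultimately have "c p = 0"
    using c_add[of "lattice_point m 0" "lattice_point 0 n"] unfolding p by (simp add: lattice_point_add)
  then show ?thesis using jump[OF assms] by simp
qed

end

lemma deriv_shift: "deriv (\<lambda>t. f (t + p)) s = deriv f (s + p)"
  unfolding deriv_def by (simp add: DERIV_shift)

lemma deriv_even_eq_0:
  fixes f :: "complex \<Rightarrow> complex"
  assumes "f field_differentiable at 0" and even: "\<And>z. f (- z) = f z"
  shows "deriv f 0 = 0"
proof -
  have f': "(f has_field_derivative deriv f 0) (at 0)"
    using assms(1) by (simp add: DERIV_deriv_iff_field_differentiable)
  have "((\<lambda>z. - z) has_field_derivative - 1) (at 0)"
    using DERIV_minus[OF DERIV_ident] .
  moreover have "(f has_field_derivative deriv f 0) (at (- 0))"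
    using f' by (simp only: minus_zero)
  ultimately have "((\<lambda>z. f (- z)) has_field_derivative deriv f 0 * - 1) (at 0)"
    by (rule DERIV_chain')
  moreover have "(\<lambda>z. f (- z)) = f"
    by (rule ext) (rule even)
  ultimately have "(f has_field_derivative - deriv f 0) (at 0)"
    by simp
  then have "deriv f 0 = - deriv f 0"
    by (rule DERIV_unique[OF f'])
  then show ?thesis by simp
qed

lemma holomorphic_double_zero_factor:
  fixes f :: "complex \<Rightarrow> complex"
  assumes holo: "f holomorphic_on S" and S: "open S" "0 \<in> S" and f0: "f 0 = 0" "deriv f 0 = 0"
  obtains g where "g holomorphic_on S" "\<And>z. z \<in> S \<Longrightarrow> f z = z\<^sup>2 * g z"
proof -
  define g1 where "g1 z = (if z = 0 then deriv f 0 else (f z - f 0) / (z - 0))" for z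
  define g2 where "g2 z = (if z = 0 then deriv g1 0 else (g1 z - g1 0) / (z - 0))" for z
  have "g1 holomorphic_on S" unfolding g1_def by (rule pole_lemma_open[OF holo S(1)])
  then have "g2 holomorphic_on S" unfolding g2_def by (rule pole_lemma_open[OF _ S(1)])
  moreover have "f z = z\<^sup>2 * g2 z" if "z \<in> S" for z
    using f0 by (cases "z = 0") (simp_all add: g1_def g2_def power2_eq_square)
  ultimately show ?thesis using that by blast
qed

context period_lattice
begin

lemma holomorphic_wp_reg: "wp_reg holomorphic_on \<Omega>"
  by (subst holomorphic_on_open[OF open_Omega]) (use wp_reg_has_field_derivative in blast)

lemma deriv_wp_reg: "s \<in> \<Omega> \<Longrightarrow> deriv wp_reg s = wp_reg' s"
  using wp_reg_has_field_derivative DERIV_imp_deriv by blast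

lemma holomorphic_deriv_wp_reg: "deriv wp_reg holomorphic_on \<Omega>"
  by (rule holomorphic_deriv[OF holomorphic_wp_reg open_Omega])

lemma wp'_eq_deriv_wp_reg: "s \<in> \<Omega> \<Longrightarrow> wp' s = -2 / s ^ 3 + deriv wp_reg s"
  using wp'_eq_wp_reg' deriv_wp_reg by simp

lemma holomorphic_wp': "wp' holomorphic_on - \<Lambda>"
proof -
  have "(\<lambda>s. -2 / s ^ 3) holomorphic_on - \<Lambda>"
    by (intro holomorphic_intros) auto
  moreover have "deriv wp_reg holomorphic_on - \<Lambda>"
    by (rule holomorphic_on_subset[OF holomorphic_deriv_wp_reg]) blast
  ultimately have "(\<lambda>s. -2 / s ^ 3 + deriv wp_reg s) holomorphic_on - \<Lambda>"
    by (rule holomorphic_on_add)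
  then show ?thesis
  proof (rule holomorphic_transform)
    show "-2 / s ^ 3 + deriv wp_reg s = wp' s" if "s \<in> - \<Lambda>" for s
      using that wp'_eq_deriv_wp_reg by simp
  qed
qed

definition wp'' :: "complex \<Rightarrow> complex" where "wp'' = deriv wp'"

lemma wp'_has_field_derivative: "s \<notin> \<Lambda> \<Longrightarrow> (wp' has_field_derivative wp'' s) (at s)"
  unfolding wp''_def using holomorphic_wp' open_lattice_compl
  by (simp add: DERIV_deriv_iff_field_differentiable holomorphic_on_imp_differentiable_at)

lemma holomorphic_wp'': "wp'' holomorphic_on - \<Lambda>"
  unfolding wp''_def by (rule holomorphic_deriv[OF holomorphic_wp' open_lattice_compl])

lemma wp''_periodic: "p \<in> \<Lambda> \<Longrightarrow> wp'' (s + p) = wp'' s"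
  using deriv_shift[of wp' p s] wp'_periodic unfolding wp''_def by simp

lemma wp''_eq_deriv2_wp_reg:
  assumes "s \<in> \<Omega>" "s \<noteq> 0" shows "wp'' s = 6 / s ^ 4 + deriv (deriv wp_reg) s"
proof -
  have "eventually (\<lambda>t. wp' t = -2 / t ^ 3 + deriv wp_reg t) (nhds s)"
    using open_Omega assms(1) by (intro eventually_nhds_in_open[THEN eventually_mono]) (auto simp: wp'_eq_deriv_wp_reg)
  then have "wp'' s = deriv (\<lambda>t. -2 / t ^ 3 + deriv wp_reg t) s"
    unfolding wp''_def by (rule deriv_cong_ev) simp
  also have "\<dots> = 6 / s ^ 4 + deriv (deriv wp_reg) s"
  proof (intro DERIV_imp_deriv DERIV_add)
    show "((\<lambda>t. -2 / t ^ 3) has_field_derivative 6 / s ^ 4) (at s)"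
      using assms(2) by (auto intro!: derivative_eq_intros simp: field_simps eval_nat_numeral)
    show "(deriv wp_reg has_field_derivative deriv (deriv wp_reg) s) (at s)"
      using holomorphic_on_imp_differentiable_at[OF holomorphic_deriv_wp_reg open_Omega assms(1)]
      by (simp add: DERIV_deriv_iff_field_differentiable)
  qed
  finally show ?thesis .
qed

end

context period_lattice
begin

definition ode_defect :: "complex \<Rightarrow> complex" where
  "ode_defect s = wp'' s - 6 * (wp w1 w2 s)\<^sup>2"

lemma holomorphic_ode_defect: "ode_defect holomorphic_on - \<Lambda>"
  unfolding ode_defect_def by (intro holomorphic_intros holomorphic_wp'' holomorphic_wp)

lemma ode_defect_periodic: "p \<in> \<Lambda> \<Longrightarrow> s \<notin> \<Lambda> \<Longrightarrow> ode_defect (s + p) = ode_defect s"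
  unfolding ode_defect_def using wp''_periodic wp_periodic by simp

lemma cball_gap_subset_Omega: "cball 0 (gap / 2) \<subseteq> \<Omega>"
proof
  fix z :: complex assume "z \<in> cball 0 (gap / 2)"
  then show "z \<in> \<Omega>" using norm_lattice_ge_gap[of z] gap_pos by (cases "z = 0") auto
qed

lemma ode_defect_bounded_near_0:
  obtains B where "\<And>s. s \<noteq> 0 \<Longrightarrow> cmod s \<le> gap / 2 \<Longrightarrow> cmod (ode_defect s) \<le> B"
proof -
  \<comment> \<open>The regular part is even and vanishes at \<open>0\<close>, so it has a double zero there; hence the
    term \<open>12 wp_reg s / s\<^sup>2\<close> of \<open>wp'' s - 6 (wp s)\<^sup>2\<close> stays bounded.\<close>
  have "wp_reg 0 = 0" unfolding wp_reg_def wp_term_def by simp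
  moreover have "deriv wp_reg 0 = 0"
    using holomorphic_on_imp_differentiable_at[OF holomorphic_wp_reg open_Omega]
    by (intro deriv_even_eq_0 wp_reg_even) simp
  ultimately obtain g where g: "g holomorphic_on \<Omega>" "\<And>z. z \<in> \<Omega> \<Longrightarrow> wp_reg z = z\<^sup>2 * g z"
    using holomorphic_double_zero_factor[OF holomorphic_wp_reg open_Omega] by blast
  define G where "G z = deriv (deriv wp_reg) z - 12 * g z - 6 * (wp_reg z)\<^sup>2" for z
  have "G holomorphic_on \<Omega>"
    unfolding G_def by (intro holomorphic_intros holomorphic_deriv holomorphic_deriv_wp_reg open_Omega g(1)
      holomorphic_wp_reg)
  then have "compact (G ` cball 0 (gap / 2))"
    by (intro compact_continuous_image holomorphic_on_imp_continuous_on
        holomorphic_on_subset[OF _ cball_gap_subset_Omega] compact_cball)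
  then obtain B where B: "\<And>z. z \<in> cball 0 (gap / 2) \<Longrightarrow> cmod (G z) \<le> B"
    by (meson compact_imp_bounded bounded_iff imageI)
  have "ode_defect z = G z" if "z \<noteq> 0" "cmod z \<le> gap / 2" for z
  proof -
    have z: "z \<in> \<Omega>" using cball_gap_subset_Omega that(2) by auto
    have "ode_defect z = 6 / z ^ 4 + deriv (deriv wp_reg) z - 6 * (1 / z\<^sup>2 + z\<^sup>2 * g z)\<^sup>2"
      unfolding ode_defect_def wp''_eq_deriv2_wp_reg[OF z that(1)] wp_eq_wp_reg g(2)[OF z] ..
    also have "\<dots> = G z"
      unfolding G_def g(2)[OF z] using that(1) by (simp add: field_simps power2_eq_square eval_nat_numeral)
    finally show ?thesis .
  qed
  then show ?thesis using that B by fastforce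
qed

definition parallelogram :: "complex set" where
  "parallelogram = (\<lambda>(x, y). of_real x * (2 * w1) + of_real y * (2 * w2)) ` ({0..1} \<times> {0..1})"

lemma compact_parallelogram: "compact parallelogram"
  unfolding parallelogram_def
  by (intro compact_continuous_image compact_Times compact_Icc) (auto intro!: continuous_intros simp: case_prod_unfold)

lemma real_coordinates: "s = of_real (- Im (cnj w2 * s) / (2 * period_det)) * (2 * w1)
                           + of_real (Im (cnj w1 * s) / (2 * period_det)) * (2 * w2)"
proof -
  define a b where "a = - Im (cnj w2 * s) / (2 * period_det)" and "b = Im (cnj w1 * s) / (2 * period_det)"
  have "2 * period_det * a = - Im (cnj w2 * s)" "2 * period_det * b = Im (cnj w1 * s)"
    unfolding a_def b_def using period_det_pos by simp_all
  moreover have "of_real period_det * (of_real a * (2 * w1) + of_real b * (2 * w2))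
      = of_real (2 * period_det * a) * w1 + of_real (2 * period_det * b) * w2"
    by (simp add: algebra_simps)
  moreover have "of_real (- Im (cnj w2 * s)) * w1 + of_real (Im (cnj w1 * s)) * w2 = of_real period_det * s"
    unfolding period_det_def by (simp add: complex_eq_iff algebra_simps)
  ultimately have "of_real period_det * (of_real a * (2 * w1) + of_real b * (2 * w2)) = of_real period_det * s"
    by (simp only:)
  then have "of_real a * (2 * w1) + of_real b * (2 * w2) = s"
    using period_det_pos by simp
  then show ?thesis unfolding a_def b_def by simp
qed

lemma lattice_reduce: obtains t m n where "t \<in> parallelogram" "s = t + lattice_point m n"
proof -
  define a b where "a = - Im (cnj w2 * s) / (2 * period_det)" and "b = Im (cnj w1 * s) / (2 * period_det)"
  define t where "t = of_real (a - of_int \<lfloor>a\<rfloor>) * (2 * w1) + of_real (b - of_int \<lfloor>b\<rfloor>) * (2 * w2)"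
  have "t \<in> parallelogram" unfolding parallelogram_def t_def
    by (rule image_eqI[where x = "(a - of_int \<lfloor>a\<rfloor>, b - of_int \<lfloor>b\<rfloor>)"]) (auto, linarith+)
  moreover have "s = t + lattice_point \<lfloor>a\<rfloor> \<lfloor>b\<rfloor>"
    using real_coordinates[of s] unfolding t_def lattice_point_def a_def b_def by (simp add: algebra_simps)
  ultimately show ?thesis using that by blast
qed

lemma ode_defect_bounded: obtains B where "\<And>s. s \<notin> \<Lambda> \<Longrightarrow> cmod (ode_defect s) \<le> B"
proof -
  \<comment> \<open>Bounded near the lattice by periodicity, and on the rest of a fundamental parallelogram by compactness.\<close>
  define U where "U = (\<Union>p\<in>\<Lambda>. ball p (gap / 2))"
  define K where "K = parallelogram - U"
  have "compact K"
    unfolding K_def U_def by (intro compact_diff compact_parallelogram open_UN ballI open_ball)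
  moreover have "K \<subseteq> - \<Lambda>"
  proof
    fix t assume "t \<in> K"
    then have "t \<notin> ball t (gap / 2) \<or> t \<notin> \<Lambda>" unfolding K_def U_def by blast
    then show "t \<in> - \<Lambda>" using gap_pos by simp
  qed
  ultimately have "compact (ode_defect ` K)"
    by (intro compact_continuous_image holomorphic_on_imp_continuous_on
        holomorphic_on_subset[OF holomorphic_ode_defect])
  then obtain BK where BK: "\<And>t. t \<in> K \<Longrightarrow> cmod (ode_defect t) \<le> BK"
    by (meson compact_imp_bounded bounded_iff imageI)
  obtain B0 where B0: "\<And>s. s \<noteq> 0 \<Longrightarrow> cmod s \<le> gap / 2 \<Longrightarrow> cmod (ode_defect s) \<le> B0"
    using ode_defect_bounded_near_0 by blast
  have "cmod (ode_defect s) \<le> max BK B0" if s: "s \<notin> \<Lambda>" for s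
  proof -
    obtain t m n where t: "t \<in> parallelogram" "s = t + lattice_point m n" using lattice_reduce by blast
    have t_notin: "t \<notin> \<Lambda>" using s t lattice_add lattice_point_in_lattice by blast
    then have s_t: "ode_defect s = ode_defect t" using ode_defect_periodic t(2) by simp
    show ?thesis
    proof (cases "t \<in> U")
      case False
      then have "t \<in> K" unfolding K_def using t(1) by blast
      then show ?thesis using BK[of t] s_t by simp
    next
      case True
      then obtain p where p: "p \<in> \<Lambda>" "dist p t < gap / 2" unfolding U_def by auto
      have tp: "t - p \<notin> \<Lambda>" using t_notin p(1) lattice_add[of "t - p" p] by auto
      then have "ode_defect t = ode_defect (t - p)"
        using ode_defect_periodic[OF p(1) tp] by simp
      moreover have "t - p \<noteq> 0" using tp by auto
      moreover have "cmod (t - p) \<le> gap / 2" using p(2) by (simp add: dist_norm norm_minus_commute)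
      ultimately show ?thesis using B0[of "t - p"] s_t by simp
    qed
  qed
  then show ?thesis using that by blast
qed

lemma removable_lattice_singularity:
  assumes holo: "f holomorphic_on - \<Lambda>" and bound: "\<And>s. s \<notin> \<Lambda> \<Longrightarrow> cmod (f s) \<le> B"
    and q: "q \<in> \<Lambda>"
  shows "isolated_singularity_at f q" and "\<exists>c. f \<midarrow>q\<rightarrow> c \<and> cmod c \<le> B"
proof -
  have near: "z \<notin> \<Lambda>" if "z \<in> ball q gap - {q}" for z
    using not_in_lattice_near[OF q] that by (simp add: dist_commute)
  have ev_bound: "eventually (\<lambda>z. cmod (f z) \<le> B) (at q)"
    unfolding eventually_at using gap_pos bound near by (intro exI[of _ gap]) (simp add: dist_commute)
  have holo_near: "f holomorphic_on ball q gap - {q}"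
    by (rule holomorphic_on_subset[OF holo]) (use near in blast)
  then show "isolated_singularity_at f q"
    using isolated_singularity_at_holomorphic gap_pos by simp
  have "\<exists>g. g holomorphic_on ball q gap \<and> (\<forall>z\<in>ball q gap - {q}. g z = f z)"
    using holo_near gap_pos ev_bound by (subst holomorphic_on_extend_bounded) auto
  then obtain g where g: "g holomorphic_on ball q gap" "\<And>z. z \<in> ball q gap - {q} \<Longrightarrow> g z = f z"
    by blast
  have "isCont g q"
    using holomorphic_on_imp_continuous_on[OF g(1)] gap_pos by (simp add: continuous_on_eq_continuous_at)
  moreover have "eventually (\<lambda>z. g z = f z) (at q)"
    unfolding eventually_at using gap_pos g(2) by (intro exI[of _ gap]) (simp add: dist_commute)
  ultimately have "f \<midarrow>q\<rightarrow> g q" unfolding isCont_def by (rule Lim_transform_eventually)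
  moreover have "cmod (g q) \<le> B" by (rule Lim_norm_ubound[OF trivial_limit_at \<open>f \<midarrow>q\<rightarrow> g q\<close> ev_bound])
  ultimately show "\<exists>c. f \<midarrow>q\<rightarrow> c \<and> cmod c \<le> B" by blast
qed

lemma holomorphic_bounded_lattice_compl_constant:
  assumes holo: "f holomorphic_on - \<Lambda>" and bound: "\<And>s. s \<notin> \<Lambda> \<Longrightarrow> cmod (f s) \<le> B"
  obtains C where "\<And>s. s \<notin> \<Lambda> \<Longrightarrow> f s = C"
proof -
  have iso: "isolated_singularity_at f q" and lim: "\<exists>c. f \<midarrow>q\<rightarrow> c \<and> cmod c \<le> B" if "q \<in> \<Lambda>" for q
    using removable_lattice_singularity[OF holo _ that] bound by blast+
  have analytic: "f analytic_on {s}" if "s \<notin> \<Lambda>" for s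
    using holomorphic_on_imp_analytic_at[OF holo open_lattice_compl] that by simp
  define F where "F = remove_sings f"
  have F_eq: "F s = f s" if "s \<notin> \<Lambda>" for s
    unfolding F_def by (rule remove_sings_at_analytic[OF analytic[OF that]])
  have "F analytic_on {z}" for z
  proof (cases "z \<in> \<Lambda>")
    case True
    then obtain c where "f \<midarrow>z\<rightarrow> c" using lim by blast
    then show ?thesis unfolding F_def by (rule remove_sings_analytic_at[OF iso[OF True]])
  next
    case False
    then show ?thesis unfolding F_def by (rule remove_sings_analytic_on[OF analytic])
  qed
  then have "F holomorphic_on UNIV"
    using analytic_imp_holomorphic analytic_on_analytic_at by blast
  moreover have "cmod (F z) \<le> B" for z
  proof (cases "z \<in> \<Lambda>")
    case True
    then obtain c where c: "f \<midarrow>z\<rightarrow> c" "cmod c \<le> B" using lim by blast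
    moreover from c(1) have "F z = c" unfolding F_def by (rule remove_sings_eqI)
    ultimately show ?thesis by simp
  next
    case False
    then show ?thesis using F_eq bound by simp
  qed
  then have "bounded (range F)" by (auto simp: bounded_iff)
  ultimately have "F constant_on UNIV" by (rule Liouville_theorem)
  then obtain C where "\<And>z. F z = C" by (auto simp: constant_on_def)
  then show ?thesis using that F_eq by metis
qed

lemma wp''_eq: obtains c where "\<And>s. s \<notin> \<Lambda> \<Longrightarrow> wp'' s = 6 * (wp w1 w2 s)\<^sup>2 + c"
proof -
  obtain B where "\<And>s. s \<notin> \<Lambda> \<Longrightarrow> cmod (ode_defect s) \<le> B" using ode_defect_bounded by blast
  then obtain c where "\<And>s. s \<notin> \<Lambda> \<Longrightarrow> ode_defect s = c"
    using holomorphic_bounded_lattice_compl_constant[OF holomorphic_ode_defect] by blast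
  then show ?thesis using that unfolding ode_defect_def by (metis diff_eq_eq add.commute)
qed

lemma wp'_squared: obtains a b where "\<And>s. s \<notin> \<Lambda> \<Longrightarrow> (wp' s)\<^sup>2 = 4 * (wp w1 w2 s) ^ 3 + a * wp w1 w2 s + b"
proof -
  obtain c where c: "\<And>s. s \<notin> \<Lambda> \<Longrightarrow> wp'' s = 6 * (wp w1 w2 s)\<^sup>2 + c" using wp''_eq by blast
  define E where "E s = (wp' s)\<^sup>2 - 4 * (wp w1 w2 s) ^ 3 - 2 * c * wp w1 w2 s" for s
  have E': "(E has_field_derivative 0) (at s)" if "s \<in> - \<Lambda>" for s
  proof -
    have "(E has_field_derivative 2 * wp' s * wp'' s - 4 * (3 * (wp w1 w2 s)\<^sup>2 * wp' s) - 2 * c * wp' s) (at s)"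
      unfolding E_def using that
      by (auto intro!: derivative_eq_intros wp_has_field_derivative wp'_has_field_derivative
          simp: power2_eq_square)
    then show ?thesis using c[of s] that by (simp add: algebra_simps power2_eq_square)
  qed
  have "continuous_on (- \<Lambda>) E"
    using E' by (intro continuous_at_imp_continuous_on) (auto intro: DERIV_isCont)
  then obtain b where "\<And>s. s \<in> - \<Lambda> \<Longrightarrow> E s = b"
    using DERIV_zero_connected_constant[OF connected_lattice_compl open_lattice_compl, of "{}" E] E' by auto
  then show ?thesis using that[of "2 * c" b] unfolding E_def by (simp add: algebra_simps)
qed

end

lemma higher_deriv_shift: "(deriv ^^ n) (\<lambda>t. f (t + p)) = (\<lambda>t. (deriv ^^ n) f (t + p))"
  by (induction n) (simp_all add: deriv_shift)

context period_lattice
begin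

inductive wp_polynomial :: "(complex \<Rightarrow> complex) \<Rightarrow> bool" where
  const: "wp_polynomial (\<lambda>s. c)"
| wp: "wp_polynomial (wp w1 w2)"
| wp': "wp_polynomial wp'"
| add: "wp_polynomial f \<Longrightarrow> wp_polynomial g \<Longrightarrow> wp_polynomial (\<lambda>s. f s + g s)"
| mult: "wp_polynomial f \<Longrightarrow> wp_polynomial g \<Longrightarrow> wp_polynomial (\<lambda>s. f s * g s)"

lemma wp_polynomial_has_derivative:
  "wp_polynomial f \<Longrightarrow> \<exists>g. wp_polynomial g \<and> (\<forall>s\<in>- \<Lambda>. (f has_field_derivative g s) (at s))"
proof (induction rule: wp_polynomial.induct)
  case (const c)
  show ?case by (intro exI[of _ "\<lambda>s. 0"]) (auto intro: wp_polynomial.intros)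
next
  case wp
  show ?case using wp_has_field_derivative by (intro exI[of _ wp']) (auto intro: wp_polynomial.intros)
next
  case wp'
  obtain c where c: "\<And>s. s \<notin> \<Lambda> \<Longrightarrow> wp'' s = 6 * (wp w1 w2 s)\<^sup>2 + c" using wp''_eq by blast
  have "wp_polynomial (\<lambda>s. (\<lambda>s. 6) s * (wp w1 w2 s * wp w1 w2 s) + (\<lambda>s. c) s)"
    by (intro wp_polynomial.intros)
  moreover have "(wp' has_field_derivative 6 * (wp w1 w2 s * wp w1 w2 s) + c) (at s)" if "s \<in> - \<Lambda>" for s
    using wp'_has_field_derivative[of s] c[of s] that by (simp add: power2_eq_square)
  ultimately show ?case by (intro exI[of _ "\<lambda>s. 6 * (wp w1 w2 s * wp w1 w2 s) + c"]) auto
next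
  case (add f g)
  then obtain f' g' where "wp_polynomial f'" "\<forall>s\<in>- \<Lambda>. (f has_field_derivative f' s) (at s)"
    and "wp_polynomial g'" "\<forall>s\<in>- \<Lambda>. (g has_field_derivative g' s) (at s)" by blast
  then show ?case by (intro exI[of _ "\<lambda>s. f' s + g' s"]) (auto intro: wp_polynomial.intros DERIV_add)
next
  case (mult f g)
  then obtain f' g' where f': "wp_polynomial f'" "\<forall>s\<in>- \<Lambda>. (f has_field_derivative f' s) (at s)"
    and g': "wp_polynomial g'" "\<forall>s\<in>- \<Lambda>. (g has_field_derivative g' s) (at s)" by blast
  have "wp_polynomial (\<lambda>s. f' s * g s + g' s * f s)"
    using f' g' mult.hyps by (intro wp_polynomial.intros)
  moreover have "((\<lambda>s. f s * g s) has_field_derivative f' s * g s + g' s * f s) (at s)" if "s \<in> - \<Lambda>" for s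
    using f' g' that by (intro DERIV_mult) auto
  ultimately show ?case by (intro exI[of _ "\<lambda>s. f' s * g s + g' s * f s"]) auto
qed

lemma wp_polynomial_cong:
  "wp_polynomial f \<Longrightarrow> wp w1 w2 a = wp w1 w2 b \<Longrightarrow> wp' a = wp' b \<Longrightarrow> f a = f b"
  by (induction rule: wp_polynomial.induct) auto

lemma higher_deriv_wp_polynomial: "\<exists>f. wp_polynomial f \<and> (\<forall>s\<in>- \<Lambda>. (deriv ^^ n) (wp w1 w2) s = f s)"
proof (induction n)
  case 0
  show ?case by (intro exI[of _ "wp w1 w2"]) (auto intro: wp_polynomial.intros)
next
  case (Suc n)
  then obtain f where f: "wp_polynomial f" "\<forall>s\<in>- \<Lambda>. (deriv ^^ n) (wp w1 w2) s = f s" by blast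
  obtain g where g: "wp_polynomial g" "\<forall>s\<in>- \<Lambda>. (f has_field_derivative g s) (at s)"
    using wp_polynomial_has_derivative[OF f(1)] by blast
  have "(deriv ^^ Suc n) (wp w1 w2) s = g s" if s: "s \<in> - \<Lambda>" for s
  proof -
    have "eventually (\<lambda>t. (deriv ^^ n) (wp w1 w2) t = f t) (nhds s)"
      using open_lattice_compl s f(2) by (intro eventually_nhds_in_open[THEN eventually_mono]) auto
    then have "(deriv ^^ Suc n) (wp w1 w2) s = deriv f s" by (simp add: deriv_cong_ev)
    also have "\<dots> = g s" using g(2) s by (intro DERIV_imp_deriv) auto
    finally show ?thesis .
  qed
  then show ?case using g(1) by blast
qed

lemma higher_deriv_wp_eq:
  assumes "a \<notin> \<Lambda>" "b \<notin> \<Lambda>" "wp w1 w2 a = wp w1 w2 b" "wp' a = wp' b"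
  shows "(deriv ^^ n) (wp w1 w2) a = (deriv ^^ n) (wp w1 w2) b"
proof -
  obtain f where "wp_polynomial f" "\<forall>s\<in>- \<Lambda>. (deriv ^^ n) (wp w1 w2) s = f s"
    using higher_deriv_wp_polynomial by blast
  then show ?thesis using wp_polynomial_cong[of f a b] assms by auto
qed

lemma wp_double_pole: "((\<lambda>u. u\<^sup>2 * wp w1 w2 u) \<longlongrightarrow> 1) (at 0)"
proof -
  have "isCont wp_reg 0"
    using wp_reg_has_field_derivative[of 0] DERIV_isCont by blast
  then have "((\<lambda>u. 1 + u\<^sup>2 * wp_reg u) \<longlongrightarrow> 1 + 0\<^sup>2 * wp_reg 0) (at 0)"
    by (intro tendsto_intros) (simp add: isCont_def)
  moreover have "eventually (\<lambda>u. 1 + u\<^sup>2 * wp_reg u = u\<^sup>2 * wp w1 w2 u) (at 0)"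
    unfolding eventually_at by (intro exI[of _ 1]) (auto simp: wp_eq_wp_reg field_simps)
  ultimately show ?thesis by (simp add: Lim_transform_eventually)
qed

lemma not_eventually_wp_translate_eq:
  assumes "d \<notin> \<Lambda>" shows "\<not> eventually (\<lambda>u. wp w1 w2 (u + d) = wp w1 w2 u) (at 0)"
proof
  assume ev: "eventually (\<lambda>u. wp w1 w2 (u + d) = wp w1 w2 u) (at 0)"
  have "((\<lambda>u. wp w1 w2 (u + d)) has_field_derivative wp' (0 + d)) (at 0)"
    using wp_has_field_derivative[of "0 + d"] assms by (simp only: DERIV_shift) simp
  then have "isCont (\<lambda>u. wp w1 w2 (u + d)) 0" by (rule DERIV_isCont)
  then have "((\<lambda>u. wp w1 w2 (u + d)) \<longlongrightarrow> wp w1 w2 d) (at 0)"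
    by (simp add: isCont_def)
  then have "(wp w1 w2 \<longlongrightarrow> wp w1 w2 d) (at 0)" using ev by (rule Lim_transform_eventually)
  then have "((\<lambda>u. u\<^sup>2 * wp w1 w2 u) \<longlongrightarrow> 0\<^sup>2 * wp w1 w2 d) (at 0)" by (intro tendsto_intros)
  from tendsto_unique[OF _ this wp_double_pole] show False by simp
qed

lemma higher_deriv_wp_eq_imp_translate_eq:
  assumes "a \<notin> \<Lambda>" "b \<notin> \<Lambda>" and derivs: "\<And>n. (deriv ^^ n) (wp w1 w2) a = (deriv ^^ n) (wp w1 w2) b"
    and "s + a \<notin> \<Lambda>" "s + b \<notin> \<Lambda>"
  shows "wp w1 w2 (s + a) = wp w1 w2 (s + b)"
proof -
  define D where "D = {s. s + a \<notin> \<Lambda> \<and> s + b \<notin> \<Lambda>}"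
  have D: "D = (\<lambda>s. s + a) -` (- \<Lambda>) \<inter> (\<lambda>s. s + b) -` (- \<Lambda>)" unfolding D_def by auto
  have "open ((\<lambda>s. s + c) -` (- \<Lambda>))" for c :: complex
    by (intro continuous_open_vimage open_lattice_compl) (auto intro!: continuous_intros)
  then have "open D" unfolding D by blast
  moreover have "connected D"
  proof -
    have D_eq: "D = UNIV - ((\<lambda>x. x - a) ` \<Lambda> \<union> (\<lambda>x. x - b) ` \<Lambda>)"
      unfolding D_def by (force simp: image_iff algebra_simps)
    show ?thesis unfolding D_eq
      by (rule connected_open_diff_countable) (auto simp: countable_lattice connected_UNIV)
  qed
  moreover have holo: "(\<lambda>s. wp w1 w2 (s + c)) holomorphic_on D" if "\<forall>s\<in>D. s + c \<notin> \<Lambda>" for c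
  proof -
    have "(wp w1 w2 \<circ> (\<lambda>s. s + c)) holomorphic_on D"
      using that by (intro holomorphic_on_compose_gen[OF _ holomorphic_wp]) (auto intro!: holomorphic_intros)
    then show ?thesis by (simp add: o_def)
  qed
  moreover have "(deriv ^^ n) (\<lambda>s. wp w1 w2 (s + a)) 0 = (deriv ^^ n) (\<lambda>s. wp w1 w2 (s + b)) 0" for n
    using derivs by (simp add: higher_deriv_shift)
  moreover have "0 \<in> D" "s \<in> D" unfolding D_def using assms by simp_all
  ultimately show ?thesis
    using holomorphic_fun_eq_on_connected[of "\<lambda>s. wp w1 w2 (s + a)" D "\<lambda>s. wp w1 w2 (s + b)" 0 s]
    unfolding D_def by blast
qed

lemma higher_deriv_wp_eq_imp_diff_in_lattice:
  assumes a: "a \<notin> \<Lambda>" and b: "b \<notin> \<Lambda>"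
    and derivs: "\<And>n. (deriv ^^ n) (wp w1 w2) a = (deriv ^^ n) (wp w1 w2) b"
  shows "b - a \<in> \<Lambda>"
proof (rule ccontr)
  assume d: "b - a \<notin> \<Lambda>"
  obtain r where r: "r > 0" "ball (b - a) r \<subseteq> - \<Lambda>"
    using open_lattice_compl d open_contains_ball by blast
  have "wp w1 w2 (u + (b - a)) = wp w1 w2 u" if u: "u \<noteq> 0" "dist u 0 < min gap r" for u
  proof -
    have "u \<notin> \<Lambda>" using not_in_lattice_near[OF zero_in_lattice u(1)] u(2) by simp
    moreover have "u + (b - a) \<notin> \<Lambda>" using u(2) r(2) by (auto simp: dist_norm subset_iff)
    ultimately have "wp w1 w2 ((u - a) + a) = wp w1 w2 ((u - a) + b)"
      by (intro higher_deriv_wp_eq_imp_translate_eq[OF a b derivs]) (auto simp: algebra_simps)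
    then show ?thesis by (simp add: algebra_simps)
  qed
  then have "eventually (\<lambda>u. wp w1 w2 (u + (b - a)) = wp w1 w2 u) (at 0)"
    unfolding eventually_at using r gap_pos by (intro exI[of _ "min gap r"]) auto
  with not_eventually_wp_translate_eq[OF d] show False by blast
qed

lemma wp_eq_imp_higher_deriv_eq:
  assumes a: "a \<notin> \<Lambda>" and b: "b \<notin> \<Lambda>" and ab: "a + b \<notin> \<Lambda>" and eq: "wp w1 w2 a = wp w1 w2 b"
  shows "(deriv ^^ n) (wp w1 w2) a = (deriv ^^ n) (wp w1 w2) b"
proof -
  obtain c1 c0 where "\<And>s. s \<notin> \<Lambda> \<Longrightarrow> (wp' s)\<^sup>2 = 4 * (wp w1 w2 s) ^ 3 + c1 * wp w1 w2 s + c0"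
    using wp'_squared by blast
  then have "(wp' a - wp' b) * (wp' a + wp' b) = 0"
    using a b eq by (simp add: power2_eq_square algebra_simps)
  then consider "wp' a = wp' b" | "wp' a = wp' (- b)"
    using wp'_odd[of b] by (auto simp: add_eq_0_iff)
  then show ?thesis
  proof cases
    case 1
    then show ?thesis using higher_deriv_wp_eq[OF a b eq] by blast
  next
    case 2
    have b': "- b \<notin> \<Lambda>" using b lattice_uminus by fastforce
    have "- b - a \<in> \<Lambda>"
      using higher_deriv_wp_eq[OF a b' _ 2] eq wp_even[of b]
      by (intro higher_deriv_wp_eq_imp_diff_in_lattice[OF a b']) simp
    then have False using ab lattice_uminus by (metis minus_diff_eq diff_minus_eq_add add.commute)
    then show ?thesis ..
  qed
qed

end

lemma esym_0 [simp]: "esym N x 0 = 1"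
proof -
  have "{I. I \<subseteq> {1..N} \<and> card I = 0} = {{}}"
  proof (intro equalityI subsetI)
    fix I assume "I \<in> {I. I \<subseteq> {1..N} \<and> card I = 0}"
    then have "finite I" "card I = 0" using finite_subset by auto
    then show "I \<in> {{}}" by simp
  qed auto
  then show ?thesis unfolding esym_def by simp
qed

lemma esym_eq_0: assumes "N < r" shows "esym N x r = 0"
proof -
  have empty: "{I. I \<subseteq> {1..N} \<and> card I = r} = {}"
    using card_mono[of "{1..N}"] assms by (auto simp: not_le[symmetric])
  show ?thesis unfolding esym_def empty by simp
qed

lemma prod_linear_eq_sum_monom:
  fixes x :: "'b \<Rightarrow> 'a::comm_ring_1"
  assumes "finite S"
  shows "(\<Prod>i\<in>S. [:- x i, 1:]) = (\<Sum>B\<in>Pow S. monom (\<Prod>i\<in>B. - x i) (card (S - B)))"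
proof -
  have "(\<Prod>i\<in>S. [:- x i, 1:]) = (\<Prod>i\<in>S. monom (- x i) 0 + monom 1 1)"
    by (simp add: monom_0 monom_Suc)
  also have "\<dots> = (\<Sum>B\<in>Pow S. (\<Prod>i\<in>B. monom (- x i) 0) * (\<Prod>i\<in>S - B. monom 1 1))"
    by (rule prod_add[OF assms])
  also have "\<dots> = (\<Sum>B\<in>Pow S. monom (\<Prod>i\<in>B. - x i) (card (S - B)))"
  proof (rule sum.cong[OF refl])
    fix B assume "B \<in> Pow S"
    then have "finite B" using assms finite_subset by auto
    then have "(\<Prod>i\<in>B. monom (- x i) 0) = monom (\<Prod>i\<in>B. - x i) 0"
      by (induction B rule: finite_induct) (auto simp: mult_monom)
    moreover have "(\<Prod>i\<in>S - B. monom (1::'a) 1) = monom 1 (card (S - B))"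
      by (simp add: monom_altdef)
    ultimately show "(\<Prod>i\<in>B. monom (- x i) 0) * (\<Prod>i\<in>S - B. monom 1 1) = monom (\<Prod>i\<in>B. - x i) (card (S - B))"
      by (simp add: mult_monom)
  qed
  finally show ?thesis .
qed

lemma coeff_prod_linear:
  "coeff (\<Prod>i\<in>{1..N}. [:- x i, 1:]) t = (if t \<le> N then (-1) ^ (N - t) * esym N x (N - t) else 0)"
proof -
  define S where "S = {1..N}"
  have fS: "finite S" unfolding S_def by simp
  have "coeff (\<Prod>i\<in>S. [:- x i, 1:]) t = (\<Sum>B\<in>Pow S. if card (S - B) = t then (\<Prod>i\<in>B. - x i) else 0)"
    unfolding prod_linear_eq_sum_monom[OF fS] by (simp add: coeff_sum)
  also have "\<dots> = (\<Sum>B\<in>{B \<in> Pow S. card (S - B) = t}. \<Prod>i\<in>B. - x i)"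
    by (rule sum.inter_filter[symmetric]) (use fS in simp)
  also have "\<dots> = (if t \<le> N then (-1) ^ (N - t) * esym N x (N - t) else 0)"
  proof (cases "t \<le> N")
    case True
    have "card (S - B) = N - card B" "card B \<le> N" if "B \<subseteq> S" for B
      using that fS card_mono[OF fS that] by (simp_all add: card_Diff_subset finite_subset S_def)
    then have "{B \<in> Pow S. card (S - B) = t} = {I. I \<subseteq> {1..N} \<and> card I = N - t}"
      using True unfolding S_def by auto
    then show ?thesis using True by (simp add: esym_def sum_distrib_left prod_uminus)
  next
    case False
    have "card (S - B) \<le> N" for B
      unfolding S_def by (metis card_atLeastAtMost card_mono diff_le_self finite_atLeastAtMost Diff_subset diff_Suc_1)
    then have empty: "{B \<in> Pow S. card (S - B) = t} = {}" using False by auto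
    show ?thesis unfolding empty using False by simp
  qed
  finally show ?thesis unfolding S_def .
qed

lemma prod_linear_dvd:
  fixes p :: "'a::idom poly"
  assumes "finite R" "\<And>y. y \<in> R \<Longrightarrow> poly p y = 0"
  shows "(\<Prod>y\<in>R. [:- y, 1:]) dvd p"
  using assms
proof (induction R arbitrary: p rule: finite_induct)
  case empty
  then show ?case by simp
next
  case (insert y R)
  then have "[:- y, 1:] dvd p" by (simp add: poly_eq_0_iff_dvd)
  then obtain q where q: "p = [:- y, 1:] * q" by (elim dvdE)
  have "poly q u = 0" if "u \<in> R" for u
  proof -
    have "u \<noteq> y" "poly p u = 0" using insert that by auto
    then show ?thesis using q by simp
  qed
  then have "(\<Prod>y\<in>R. [:- y, 1:]) dvd q" by (rule insert.IH)
  then show ?case unfolding q prod.insert[OF insert.hyps] by (rule mult_dvd_mono[OF dvd_refl])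
qed

lemma vanishing_poly_factor:
  fixes p :: "complex poly" and x :: "nat \<Rightarrow> complex"
  assumes inj: "inj_on x {1..l}" and roots: "\<And>j. j \<in> {1..l} \<Longrightarrow> poly p (x j) = 0"
    and deg: "degree p \<le> l + 1"
  obtains a b where "p = (\<Prod>i\<in>{1..l}. [:- x i, 1:]) * [:b, a:]"
proof -
  define Q where "Q = (\<Prod>i\<in>{1..l}. [:- x i, 1:])"
  have "Q = (\<Prod>y\<in>x ` {1..l}. [:- y, 1:])"
    unfolding Q_def using prod.reindex[OF inj, of "\<lambda>y. [:- y, 1:]"] by (simp add: o_def)
  also have "\<dots> dvd p" using roots by (intro prod_linear_dvd) auto
  finally obtain c where pc: "p = Q * c" by (elim dvdE)
  have lead: "coeff Q l = 1" using coeff_prod_linear[of x l l] unfolding Q_def by simp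
  have "degree Q = l"
  proof (rule antisym)
    show "degree Q \<le> l" unfolding Q_def using coeff_prod_linear[of x l] by (intro degree_le) auto
    show "l \<le> degree Q" using lead by (intro le_degree) simp
  qed
  have "degree c \<le> 1"
  proof (cases "c = 0")
    case False
    moreover have "Q \<noteq> 0" using lead by auto
    ultimately have "degree p = l + degree c"
      using pc \<open>degree Q = l\<close> by (simp add: degree_mult_eq)
    then show ?thesis using deg by simp
  qed simp
  then have "c = [:coeff c 0, coeff c 1:]"
    by (intro poly_eqI) (auto simp: coeff_pCons coeff_eq_0 split: nat.split)
  then have "p = Q * [:coeff c 0, coeff c 1:]" using pc by simp
  then show ?thesis using that unfolding Q_def by blast
qed

lemma lead_coeff_prod_linear_times_linear:
  fixes x :: "nat \<Rightarrow> complex"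
  shows "coeff ((\<Prod>i\<in>{1..l}. [:- x i, 1:]) * [:b, a:]) (l + 1) = a"
proof -
  have "(\<Prod>i\<in>{1..l}. [:- x i, 1:]) * [:b, a:]
      = Polynomial.smult b (\<Prod>i\<in>{1..l}. [:- x i, 1:]) + pCons 0 (Polynomial.smult a (\<Prod>i\<in>{1..l}. [:- x i, 1:]))"
    by (simp add: mult.commute)
  then show ?thesis using coeff_prod_linear[of x l l] coeff_prod_linear[of x l "l + 1"] by simp
qed

lemma coeff_prod_linear_times_linear:
  fixes x :: "nat \<Rightarrow> complex"
  assumes "r \<in> {1..l + 1}"
  shows "(-1) ^ r * coeff ((\<Prod>i\<in>{1..l}. [:- x i, 1:]) * [:b, a:]) (l + 1 - r)
           = a * esym l x r - b * esym l x (r - 1)"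
proof -
  define Q where "Q = (\<Prod>i\<in>{1..l}. [:- x i, 1:])"
  define S where "S = esym l x"
  have cQ: "coeff Q t = (if t \<le> l then (-1) ^ (l - t) * S (l - t) else 0)" for t
    unfolding Q_def S_def by (rule coeff_prod_linear)
  define P where "P = Q * [:b, a:]"
  have "P = Polynomial.smult b Q + pCons 0 (Polynomial.smult a Q)" unfolding P_def by (simp add: mult.commute)
  then have coeff_eq: "coeff P t = b * coeff Q t + (case t of 0 \<Rightarrow> 0 | Suc t' \<Rightarrow> a * coeff Q t')" for t
    by (simp add: coeff_pCons split: nat.split)
  obtain r' where r': "r = Suc r'" "r' \<le> l" using assms by (cases r) auto
  have sign: "(-1::complex) ^ n * (-1) ^ n = 1" for n
    by (simp add: power_mult_distrib[symmetric])
  have "(-1) ^ r * coeff P (l + 1 - r) = a * S r - b * S r'"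
  proof (cases "r = l + 1")
    case True
    have "coeff P (l + 1 - r) = b * ((-1) ^ l * S l)"
      using True coeff_eq[of 0] cQ[of 0] by simp
    then have "(-1) ^ r * coeff P (l + 1 - r) = (-1) ^ Suc l * (b * ((-1) ^ l * S l))"
      using True by simp
    also have "\<dots> = - (b * S l) * ((-1) ^ l * (-1) ^ l)"
      by (simp add: algebra_simps)
    also have "\<dots> = a * S r - b * S r'"
      using True r' sign[of l] esym_eq_0[of l "l + 1" x] unfolding S_def by simp
    finally show ?thesis .
  next
    case False
    then have t: "l + 1 - r = Suc (l - r)" "l - Suc (l - r) = r'" "l - (l - r) = r" using r' by auto
    have "coeff P (l + 1 - r) = b * ((-1) ^ r' * S r') + a * ((-1) ^ r * S r)"
      unfolding t(1) coeff_eq using t(2,3) False r' by (simp add: cQ)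
    then have "(-1) ^ r * coeff P (l + 1 - r) = a * S r * ((-1) ^ r * (-1) ^ r) + b * S r' * ((-1) ^ r * (-1) ^ r')"
      by (simp add: algebra_simps)
    moreover have "(-1) ^ r * (-1) ^ r' = (-1::complex)" using sign[of r'] unfolding r'(1) by simp
    ultimately show ?thesis using sign[of r] by simp
  qed
  then show ?thesis unfolding P_def Q_def S_def using r'(1) by simp
qed

lemma esym_root_identity:
  fixes x mu :: "nat \<Rightarrow> complex" and l r1 r2 :: nat
  assumes inj: "inj_on x {1..l}"
    and roots: "\<And>j. j \<in> {1..l} \<Longrightarrow> (\<Sum>r=0..l+1. mu r * x j ^ r) = 0"
    and r1: "r1 \<in> {1..l+1}" and r2: "r2 \<in> {1..l+1}"
  shows "(-1) ^ r1 * esym l x (r2 - 1) * mu (l + 1 - r1) - (-1) ^ r2 * esym l x (r1 - 1) * mu (l + 1 - r2)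
       = (esym l x r1 * esym l x (r2 - 1) - esym l x r2 * esym l x (r1 - 1)) * mu (l + 1)"
proof -
  define p where "p = (\<Sum>r\<le>l+1. monom (mu r) r)"
  have coeff_p: "coeff p t = mu t" if "t \<le> l + 1" for t
    unfolding p_def using that by (rule coeff_sum_monom)
  have "degree p \<le> l + 1" unfolding p_def by (intro degree_le) (simp add: coeff_sum)
  moreover have "poly p (x j) = 0" if "j \<in> {1..l}" for j
    using roots[OF that] unfolding p_def poly_sum poly_monom by (simp add: atLeast0AtMost)
  ultimately obtain a b where pab: "p = (\<Prod>i\<in>{1..l}. [:- x i, 1:]) * [:b, a:]"
    using vanishing_poly_factor[OF inj] by blast
  have key: "(-1) ^ r * mu (l + 1 - r) = a * esym l x r - b * esym l x (r - 1)" if "r \<in> {1..l+1}" for r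
    using coeff_prod_linear_times_linear[OF that, of x b a] coeff_p[of "l + 1 - r"] unfolding pab[symmetric] by simp
  have "mu (l + 1) = a"
    using coeff_p[of "l + 1"] lead_coeff_prod_linear_times_linear[of x l b a] unfolding pab by simp
  have "(-1) ^ r1 * esym l x (r2 - 1) * mu (l + 1 - r1) - (-1) ^ r2 * esym l x (r1 - 1) * mu (l + 1 - r2)
      = ((-1) ^ r1 * mu (l + 1 - r1)) * esym l x (r2 - 1) - ((-1) ^ r2 * mu (l + 1 - r2)) * esym l x (r1 - 1)"
    by (simp add: algebra_simps)
  also have "\<dots> = (a * esym l x r1 - b * esym l x (r1 - 1)) * esym l x (r2 - 1)
                  - (a * esym l x r2 - b * esym l x (r2 - 1)) * esym l x (r1 - 1)"
    unfolding key[OF r1] key[OF r2] ..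
  also have "\<dots> = (esym l x r1 * esym l x (r2 - 1) - esym l x r2 * esym l x (r1 - 1)) * mu (l + 1)"
    unfolding \<open>mu (l + 1) = a\<close> by (simp add: algebra_simps)
  finally show ?thesis .
qed


lemma sum_filter_split: "finite A \<Longrightarrow> sum f A = sum f {i\<in>A. P i} + sum f {i\<in>A. \<not> P i}"
  by (subst sum.union_disjoint[symmetric]) (auto intro: sum.cong)

lemma phi_eq_0_if_psi_eq_0:
  assumes "(\<Sum>i=1..m. gam i * wpd w1 w2 (n i) s) = (\<Sum>i=1..l. lam i * wpd w1 w2 (k i) s)"
  shows "phi w1 w2 m n gam l k lam s = 0"
proof -
  define odd_part even_part where
    "odd_part = (\<Sum>i\<in>{i\<in>{1..m}. odd (n i)}. gam i * wpd w1 w2 (n i) s)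
                - (\<Sum>i\<in>{i\<in>{1..l}. odd (k i)}. lam i * wpd w1 w2 (k i) s)"
    and "even_part = (\<Sum>i\<in>{i\<in>{1..m}. even (n i)}. gam i * wpd w1 w2 (n i) s)
                - (\<Sum>i\<in>{i\<in>{1..l}. even (k i)}. lam i * wpd w1 w2 (k i) s)"
  have "odd_part + even_part = 0"
    using assms sum_filter_split[of "{1..m}" "\<lambda>i. gam i * wpd w1 w2 (n i) s" "\<lambda>i. odd (n i)"]
      sum_filter_split[of "{1..l}" "\<lambda>i. lam i * wpd w1 w2 (k i) s" "\<lambda>i. odd (k i)"]
    unfolding odd_part_def even_part_def by (simp add: algebra_simps)
  then have "(odd_part - even_part) * (odd_part + even_part) = 0" by simp
  then show ?thesis unfolding phi_def odd_part_def[symmetric] even_part_def[symmetric]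
    by (simp add: power2_eq_square algebra_simps)
qed

lemma (in period_lattice) inj_on_wp_if_det_nonzero:
  assumes z_off: "\<And>i. i \<in> {1..l} \<Longrightarrow> z i \<notin> \<Lambda>"
    and z_pair: "\<And>i j. i \<in> {1..l} \<Longrightarrow> j \<in> {1..l} \<Longrightarrow> i \<noteq> j \<Longrightarrow> z i + z j \<notin> \<Lambda>"
    and det_nz: "det (mat l l (\<lambda>(i, j). wpd w1 w2 (k (Suc j)) (z (Suc i)))) \<noteq> 0"
  shows "inj_on (\<lambda>i. wp w1 w2 (z i)) {1..l}"
proof (rule inj_onI, rule ccontr)
  fix i j assume i: "i \<in> {1..l}" and j: "j \<in> {1..l}" and eq: "wp w1 w2 (z i) = wp w1 w2 (z j)" and "i \<noteq> j"
  have "(deriv ^^ d) (wp w1 w2) (z i) = (deriv ^^ d) (wp w1 w2) (z j)" for d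
    using wp_eq_imp_higher_deriv_eq[OF z_off[OF i] z_off[OF j] z_pair[OF i j \<open>i \<noteq> j\<close>] eq] .
  then have "wpd w1 w2 d (z i) = wpd w1 w2 d (z j)" for d unfolding wpd_def by simp
  then have "row (mat l l (\<lambda>(i, j). wpd w1 w2 (k (Suc j)) (z (Suc i)))) (i - 1)
           = row (mat l l (\<lambda>(i, j). wpd w1 w2 (k (Suc j)) (z (Suc i)))) (j - 1)"
    using i j by (auto intro: eq_vecI)
  moreover have "i - 1 \<noteq> j - 1" "i - 1 < l" "j - 1 < l" using i j \<open>i \<noteq> j\<close> by auto
  ultimately show False using det_nz det_identical_rows[OF mat_carrier] by blast
qed

theorem mainTheorem6:
  fixes w1 w2 :: complex and m l :: nat and n k :: "nat \<Rightarrow> int"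
    and gam lam z :: "nat \<Rightarrow> complex" and mu :: "nat \<Rightarrow> complex"
    and r1 r2 :: nat
  assumes tau: "Im (w2 / w1) > 0"
    and m_pos: "m \<ge> 1" and l_pos: "l \<ge> 1"
    and n_range: "\<forall>i\<in>{1..m}. n i \<ge> 0 \<or> n i = -2" and n_inj: "inj_on n {1..m}"
    and k_range: "\<forall>i\<in>{1..l}. k i \<ge> 0 \<or> k i = -2" and k_inj: "inj_on k {1..l}"
    and l_def: "int l = max (Max (n ` {1..m})) (Max (k ` {1..l})) + 1"
    and z_off: "\<forall>i\<in>{1..l}. z i \<notin> lattice w1 w2"
    and det_nz: "det (mat l l (\<lambda>(i, j). wpd w1 w2 (k (Suc j)) (z (Suc i)))) \<noteq> 0"
    and lam_eq: "\<forall>j\<in>{1..l}. (\<Sum>i=1..m. gam i * wpd w1 w2 (n i) (z j))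
                            = (\<Sum>i=1..l. lam i * wpd w1 w2 (k i) (z j))"
    and zsum: "(\<Sum>i=1..l. z i) \<notin> lattice w1 w2"
    and pole: "is_pole (psi w1 w2 m n gam l k lam) 0"
    and pole_order: "zorder (psi w1 w2 m n gam l k lam) 0 = - int (l + 1)"
    and mu_def: "\<forall>s. s \<notin> lattice w1 w2 \<longrightarrow>
                   phi w1 w2 m n gam l k lam s = (\<Sum>r=0..l+1. mu r * wp w1 w2 s ^ r)"
    and phi_nz: "\<exists>s. s \<notin> lattice w1 w2 \<and> phi w1 w2 m n gam l k lam s \<noteq> 0"
    and z_not_pm: "\<forall>i\<in>{1..l}. (\<Sum>j=1..l. z j) - z i \<notin> lattice w1 w2
                              \<and> (\<Sum>j=1..l. z j) + z i \<notin> lattice w1 w2"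
    and z_pair: "\<forall>i\<in>{1..l}. \<forall>j\<in>{1..l}. i \<noteq> j \<longrightarrow> z i + z j \<notin> lattice w1 w2"
    and r1: "r1 \<in> {1..l+1}" and r2: "r2 \<in> {1..l+1}"
  shows "(-1) ^ r1 * esym l (\<lambda>i. wp w1 w2 (z i)) (r2 - 1) * mu (l + 1 - r1)
         - (-1) ^ r2 * esym l (\<lambda>i. wp w1 w2 (z i)) (r1 - 1) * mu (l + 1 - r2)
       = (esym l (\<lambda>i. wp w1 w2 (z i)) r1 * esym l (\<lambda>i. wp w1 w2 (z i)) (r2 - 1)
          - esym l (\<lambda>i. wp w1 w2 (z i)) r2 * esym l (\<lambda>i. wp w1 w2 (z i)) (r1 - 1)) * mu (l + 1)"
proof -
  interpret period_lattice w1 w2 by unfold_locales (rule tau)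
  have "inj_on (\<lambda>i. wp w1 w2 (z i)) {1..l}"
    using z_off z_pair by (intro inj_on_wp_if_det_nonzero[OF _ _ det_nz]) auto
  moreover have "(\<Sum>r=0..l+1. mu r * wp w1 w2 (z j) ^ r) = 0" if "j \<in> {1..l}" for j
    using mu_def z_off that phi_eq_0_if_psi_eq_0[OF lam_eq[rule_format, OF that]] by simp
  ultimately show ?thesis using r1 r2 by (rule esym_root_identity)
qed

end
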